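(* Assume condition (N), $\chi(0)<0$, $g(s,\tau)\leq g'(0,\tau)s$ for all $s\geq0$, $\tau\in X$, and condition (L) with constant $\delta>0$. Suppose $\chi$ is defined on an open interval $(0,\bar\omega)$ and changes sign there; let $\lambda\in(0,\bar\omega)$ be the leftmost positive zero of $\chi$, and let $\epsilon>0$ be such that $\nu:=\lambda+\epsilon<\bar\omega$ and $\chi(\nu)>0$. Then $\mathfrak K$ is a closed, bounded, convex subset of the Banach space $\mathfrak X$, $\mathcal A(\mathfrak K)\subseteq\mathfrak K$, and $\mathcal A:\mathfrak K\to\mathfrak K$ is completely continuous (continuous, with $\mathcal A(\mathfrak K)$ relatively compact).
   Context: Let $(X,\mu)$ be a finite measure space. Let $K:\mathbb{R}\times X\to[0,\infty)$ be measurable and integrable on $\mathbb{R}\times X$, with $\int_{\mathbb{R}}K(s,\tau)\,ds>0$ for every $\tau$. Let $g:[0,\infty)\times X\to[0,\infty)$ be measurable, with $g(0,\tau)=0$, $g(\cdot,\tau)$ continuous for each $\tau$, and the derivative $g'(0,\tau)$ at $0$ existing and positive. $\chi(z)=1-\int_X\int_{\mathbb{R}}K(s,\tau)g'(0,\tau)e^{-sz}\,ds\,d\mu(\tau)$ where the integral converges. Condition (N): (N1) there is $\tau_0\in X$ with $\mu(\{\tau_0\})=1$ such that $g(v,\tau)$ is increasing in $v$ for each $\tau\neq\tau_0$ and $g(v,\tau_0)>0$ for $v>0$; $\tilde g(v)=\int_{X\setminus\{\tau_0\}}g(v,\tau)\left(\int_{\mathbb{R}}K(s,\tau)ds\right)d\mu(\tau)$.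 (N2) there is $\zeta_2>0$ such that $\Theta(v)=v-\tilde g(v)$ is strictly increasing on $[0,\zeta_2]$ and $\Theta(\zeta_2)>C\max_{v\geq0}g(v,\tau_0)$, $C=\int_{\mathbb{R}}K(s,\tau_0)ds$. Condition (L): $g$ is bounded, $g(s,\tau)>0$ for $s>0$, and there is $\delta>0$ with $g(s,\tau)=g'(0,\tau)s$ for all $s\in[0,\delta)$, $\tau\in X$. $\mathfrak X=\{\varphi\in C(\mathbb{R},\mathbb{R}):\|\varphi\|=\sup_{s\leq0}e^{-0.5\lambda s}|\varphi(s)|+\sup_{s\geq0}e^{-\nu s}|\varphi(s)|<+\infty\}$ with norm $\|\cdot\|$. $\phi^+(t)=\delta e^{\lambda t}$; $\phi^-(t)=\delta e^{\lambda t}(1-e^{\epsilon t})$ for $t\leq0$ and $\phi^-(t)=0$ for $t>0$. $\mathfrak K=\{\varphi\in\mathfrak X:\phi^-(t)\leq\varphi(t)\leq\phi^+(t)\ \forall t\in\mathbb{R}\}$. $\mathcal A\varphi(t)=\int_X d\mu(\tau)\int_{\mathbb{R}}K(s,\tau)g(\varphi(t-s),\tau)\,ds$. *)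

theory Defs
  imports "HOL-Analysis.Analysis"
begin

definition chi :: "'b measure \<Rightarrow> (real \<Rightarrow> 'b \<Rightarrow> real) \<Rightarrow> ('b \<Rightarrow> real) \<Rightarrow> real \<Rightarrow> real" where
  "chi M K gd z = 1 - (\<integral>\<tau>. (\<integral>s. K s \<tau> * gd \<tau> * exp (- s * z) \<partial>lborel) \<partial>M)"

definition chi_defined :: "'b measure \<Rightarrow> (real \<Rightarrow> 'b \<Rightarrow> real) \<Rightarrow> ('b \<Rightarrow> real) \<Rightarrow> real \<Rightarrow> bool" where
  "chi_defined M K gd z \<longleftrightarrow> integrable (lborel \<Otimes>\<^sub>M M) (\<lambda>(s, \<tau>). K s \<tau> * gd \<tau> * exp (- s * z))"

definition wnorm :: "real \<Rightarrow> real \<Rightarrow> (real \<Rightarrow> real) \<Rightarrow> real" where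
  "wnorm lam nu \<phi> = (SUP s\<in>{..0}. exp (- (lam / 2) * s) * \<bar>\<phi> s\<bar>)
                   + (SUP s\<in>{0..}. exp (- nu * s) * \<bar>\<phi> s\<bar>)"

definition Xsp :: "real \<Rightarrow> real \<Rightarrow> (real \<Rightarrow> real) set" where
  "Xsp lam nu = {\<phi>. continuous_on UNIV \<phi>
      \<and> bdd_above ((\<lambda>s. exp (- (lam / 2) * s) * \<bar>\<phi> s\<bar>) ` {..0})
      \<and> bdd_above ((\<lambda>s. exp (- nu * s) * \<bar>\<phi> s\<bar>) ` {0..})}"

definition phi_plus :: "real \<Rightarrow> real \<Rightarrow> real \<Rightarrow> real" where
  "phi_plus \<delta> lam t = \<delta> * exp (lam * t)"

definition phi_minus :: "real \<Rightarrow> real \<Rightarrow> real \<Rightarrow> real \<Rightarrow> real" where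
  "phi_minus \<delta> lam eps t = (if t \<le> 0 then \<delta> * exp (lam * t) * (1 - exp (eps * t)) else 0)"

definition Kset :: "real \<Rightarrow> real \<Rightarrow> real \<Rightarrow> real \<Rightarrow> (real \<Rightarrow> real) set" where
  "Kset \<delta> lam eps nu = {\<phi> \<in> Xsp lam nu.
      \<forall>t. phi_minus \<delta> lam eps t \<le> \<phi> t \<and> \<phi> t \<le> phi_plus \<delta> lam t}"

definition Aop :: "'b measure \<Rightarrow> (real \<Rightarrow> 'b \<Rightarrow> real) \<Rightarrow> (real \<Rightarrow> 'b \<Rightarrow> real)
                   \<Rightarrow> (real \<Rightarrow> real) \<Rightarrow> real \<Rightarrow> real" where
  "Aop M K g \<phi> t = (\<integral>\<tau>. (\<integral>s. K s \<tau> * g (\<phi> (t - s)) \<tau> \<partial>lborel) \<partial>M)"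

end

theory Submission
  imports Defs "HOL-Complex_Analysis.Great_Picard"
begin

text \<open>Invariance of the cone: subtangency \<open>g(s,\<tau>) \<le> g'(0,\<tau>) s\<close> together with \<open>\<chi>(\<lambda>) = 0\<close>
  gives \<open>\<A>\<phi> \<le> \<phi>\<^sup>+\<close>, while linearity of \<open>g\<close> below \<open>\<delta>\<close> together with \<open>\<chi>(\<nu>) > 0\<close> gives
  \<open>\<A>\<phi> \<ge> \<phi>\<^sup>-\<close>. Both bounds decay against the weight of the norm at both ends, so on the cone
  convergence in norm is the same as uniform convergence on compact intervals. All \<open>\<A>\<phi>\<close> share the
  bound \<open>\<phi>\<^sup>+\<close> and the modulus of continuity \<open>a \<mapsto> B \<integral>\<integral> |K(s + a, \<tau>) - K(s, \<tau>)|\<close>, which tends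
  to \<open>0\<close> by \<open>L\<^sup>1\<close>-continuity of translation; Arzela-Ascoli on \<open>[-i, i]\<close> and a diagonal argument
  then give compactness, and dominated convergence gives continuity.\<close>

section \<open>\<open>L\<^sup>1\<close>-continuity of translation on the real line\<close>

definition L1_translation_continuous :: "(real \<Rightarrow> real) \<Rightarrow> bool" where
  "L1_translation_continuous h \<longleftrightarrow> ((\<lambda>a. \<integral>s. \<bar>h (s + a) - h s\<bar> \<partial>lborel) \<longlongrightarrow> 0) (at 0)"

lemma integrable_lborel_translate:
  assumes "integrable lborel (f :: real \<Rightarrow> real)"
  shows "integrable lborel (\<lambda>s. f (s + a))"
  using lborel_integrable_real_affine[OF assms, of 1 a] by (simp add: add.commute)

lemma integral_lborel_translate:
  "(\<integral>s. (f :: real \<Rightarrow> real) (s + a) \<partial>lborel) = (\<integral>s. f s \<partial>lborel)"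
  using lborel_integral_real_affine[of 1 f a] by (simp add: add.commute)

lemma integral_abs_translate_diff_le:
  fixes f g :: "real \<Rightarrow> real"
  assumes f: "integrable lborel f" and g: "integrable lborel g"
  shows "(\<integral>s. \<bar>f (s + a) - f s\<bar> \<partial>lborel) \<le>
    (\<integral>s. \<bar>g (s + a) - g s\<bar> \<partial>lborel) + 2 * (\<integral>s. \<bar>f s - g s\<bar> \<partial>lborel)"
proof -
  have fa: "integrable lborel (\<lambda>s. f (s + a))" and ga: "integrable lborel (\<lambda>s. g (s + a))"
    using f g by (auto intro: integrable_lborel_translate)
  have "(\<integral>s. \<bar>f (s + a) - f s\<bar> \<partial>lborel) \<le>
      (\<integral>s. \<bar>f (s + a) - g (s + a)\<bar> + \<bar>g (s + a) - g s\<bar> + \<bar>f s - g s\<bar> \<partial>lborel)"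
    by (rule integral_mono) (use f g fa ga in auto)
  also have "\<dots> = (\<integral>s. \<bar>f (s + a) - g (s + a)\<bar> \<partial>lborel) + (\<integral>s. \<bar>g (s + a) - g s\<bar> \<partial>lborel)
      + (\<integral>s. \<bar>f s - g s\<bar> \<partial>lborel)"
    using f g fa ga by simp
  also have "(\<integral>s. \<bar>f (s + a) - g (s + a)\<bar> \<partial>lborel) = (\<integral>s. \<bar>f s - g s\<bar> \<partial>lborel)"
    using integral_lborel_translate[of "\<lambda>s. \<bar>f s - g s\<bar>" a] by simp
  finally show ?thesis by simp
qed

lemma L1_translation_continuous_approx:
  assumes h: "integrable lborel h"
    and approx: "\<And>e. e > 0 \<Longrightarrow> \<exists>f. integrable lborel f \<and> L1_translation_continuous f
                                    \<and> (\<integral>s. \<bar>h s - f s\<bar> \<partial>lborel) < e"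
  shows "L1_translation_continuous h"
  unfolding L1_translation_continuous_def
proof (rule tendstoI)
  fix e :: real assume e: "e > 0"
  obtain f where f: "integrable lborel f" "L1_translation_continuous f"
    and hf: "(\<integral>s. \<bar>h s - f s\<bar> \<partial>lborel) < e / 3"
    using approx[of "e / 3"] e by auto
  have "\<forall>\<^sub>F a in at 0. dist (\<integral>s. \<bar>f (s + a) - f s\<bar> \<partial>lborel) 0 < e / 3"
    using f(2) e unfolding L1_translation_continuous_def by (intro tendstoD) auto
  then show "\<forall>\<^sub>F a in at 0. dist (\<integral>s. \<bar>h (s + a) - h s\<bar> \<partial>lborel) 0 < e"
  proof eventually_elim
    case (elim a)
    then show ?case
      using integral_abs_translate_diff_le[OF h f(1), of a] hf by simp
  qed
qed

lemma L1_translation_continuous_dominated: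
  assumes h: "integrable lborel h"
    and f: "integrable lborel f" "L1_translation_continuous f"
    and g: "integrable lborel g" "L1_translation_continuous g"
    and le: "\<And>s a. \<bar>h (s + a) - h s\<bar> \<le> \<bar>f (s + a) - f s\<bar> + \<bar>g (s + a) - g s\<bar>"
  shows "L1_translation_continuous h"
  unfolding L1_translation_continuous_def
proof (rule tendsto_sandwich[of "\<lambda>_. 0" _ _
    "\<lambda>a. (\<integral>s. \<bar>f (s + a) - f s\<bar> \<partial>lborel) + (\<integral>s. \<bar>g (s + a) - g s\<bar> \<partial>lborel)"])
  show "\<forall>\<^sub>F a in at 0. (\<integral>s. \<bar>h (s + a) - h s\<bar> \<partial>lborel) \<le>
     (\<integral>s. \<bar>f (s + a) - f s\<bar> \<partial>lborel) + (\<integral>s. \<bar>g (s + a) - g s\<bar> \<partial>lborel)"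
  proof (rule always_eventually, rule allI)
    fix a
    have fa: "integrable lborel (\<lambda>s. \<bar>f (s + a) - f s\<bar>)"
      and ga: "integrable lborel (\<lambda>s. \<bar>g (s + a) - g s\<bar>)"
      using f(1) g(1) integrable_lborel_translate[OF f(1), of a]
        integrable_lborel_translate[OF g(1), of a] by auto
    have "(\<integral>s. \<bar>h (s + a) - h s\<bar> \<partial>lborel) \<le> (\<integral>s. \<bar>f (s + a) - f s\<bar> + \<bar>g (s + a) - g s\<bar> \<partial>lborel)"
      using integrable_lborel_translate[OF h, of a] h fa ga le by (intro integral_mono) auto
    then show "(\<integral>s. \<bar>h (s + a) - h s\<bar> \<partial>lborel) \<le>
     (\<integral>s. \<bar>f (s + a) - f s\<bar> \<partial>lborel) + (\<integral>s. \<bar>g (s + a) - g s\<bar> \<partial>lborel)"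
      using fa ga by simp
  qed
  show "((\<lambda>a. (\<integral>s. \<bar>f (s + a) - f s\<bar> \<partial>lborel) + (\<integral>s. \<bar>g (s + a) - g s\<bar> \<partial>lborel)) \<longlongrightarrow> 0) (at 0)"
    using tendsto_add[OF f(2)[unfolded L1_translation_continuous_def]
        g(2)[unfolded L1_translation_continuous_def]] by simp
qed simp_all

lemma L1_translation_continuous_add:
  assumes "integrable lborel f" "L1_translation_continuous f"
    and "integrable lborel g" "L1_translation_continuous g"
  shows "L1_translation_continuous (\<lambda>s. f s + g s)"
  by (rule L1_translation_continuous_dominated[OF _ assms]) (use assms in auto)

lemma L1_translation_continuous_mult_const:
  assumes "L1_translation_continuous f"
  shows "L1_translation_continuous (\<lambda>s. f s * c)"
proof -
  have "\<bar>f (s + a) * c - f s * c\<bar> = \<bar>c\<bar> * \<bar>f (s + a) - f s\<bar>" for s a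
    by (metis abs_mult left_diff_distrib mult.commute)
  then show ?thesis
    using tendsto_mult_right_zero[OF assms[unfolded L1_translation_continuous_def], of "\<bar>c\<bar>"]
    unfolding L1_translation_continuous_def by simp
qed

lemma L1_translation_continuous_indicator_Icc:
  "L1_translation_continuous (indicator {a..b :: real})"
  unfolding L1_translation_continuous_def
proof (rule tendsto_sandwich[of "\<lambda>_. 0" _ _ "\<lambda>x. 4 * \<bar>x\<bar>"])
  show "\<forall>\<^sub>F x in at 0. (\<integral>s. \<bar>indicator {a..b} (s + x) - indicator {a..b} s :: real\<bar> \<partial>lborel) \<le> 4 * \<bar>x\<bar>"
  proof (rule always_eventually, rule allI)
    fix x :: real
    have "(\<integral>s. \<bar>indicator {a..b} (s + x) - indicator {a..b} s :: real\<bar> \<partial>lborel) \<le>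
        (\<integral>s. indicator {a - \<bar>x\<bar>..a + \<bar>x\<bar>} s + (indicator {b - \<bar>x\<bar>..b + \<bar>x\<bar>} s :: real) \<partial>lborel)"
      by (rule integral_mono)
        (auto split: split_indicator intro!: integrable_abs Bochner_Integration.integrable_diff
          integrable_lborel_translate integrable_real_indicator simp: emeasure_lborel_Icc_eq)
    also have "\<dots> = 4 * \<bar>x\<bar>"
      by (subst Bochner_Integration.integral_add) (auto intro!: integrable_real_indicator)
    finally show "(\<integral>s. \<bar>indicator {a..b} (s + x) - indicator {a..b} s :: real\<bar> \<partial>lborel) \<le> 4 * \<bar>x\<bar>" .
  qed
  show "((\<lambda>x. 4 * \<bar>x\<bar>) \<longlongrightarrow> 0) (at (0::real))"
    by (rule tendsto_eq_intros | simp)+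
qed simp_all

lemma L1_translation_continuous_indicator_Un:
  assumes A: "A \<in> sets borel" "emeasure lborel A < \<infinity>" "L1_translation_continuous (indicator A)"
    and B: "B \<in> sets borel" "emeasure lborel B < \<infinity>" "L1_translation_continuous (indicator B)"
  shows "L1_translation_continuous (indicator (A \<union> B))"
proof (rule L1_translation_continuous_dominated[of _ "indicator A" "indicator B"])
  have "emeasure lborel (A \<union> B) \<le> emeasure lborel A + emeasure lborel B"
    using A B by (intro emeasure_subadditive) auto
  also have "\<dots> < \<infinity>" using A B by (simp add: ennreal_add_less_top)
  finally show "integrable lborel (indicat_real (A \<union> B))"
    using A B by (intro integrable_real_indicator) auto
qed (use A B in \<open>auto intro!: integrable_real_indicator split: split_indicator\<close>)

lemma L1_translation_continuous_indicator_Union_Icc: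
  "L1_translation_continuous (indicator (\<Union>i<(n::nat). {a i..b i :: real}))"
proof (induction n)
  case 0
  then show ?case by (simp add: L1_translation_continuous_def)
next
  case (Suc n)
  have "emeasure lborel (\<Union>i<n. {a i..b i}) \<le> (\<Sum>i<n. emeasure lborel {a i..b i})"
    by (intro emeasure_subadditive_finite) auto
  also have "\<dots> < \<infinity>" by (simp add: emeasure_lborel_Icc_eq less_top[symmetric])
  finally have "emeasure lborel (\<Union>i<n. {a i..b i}) < \<infinity>" .
  then show ?case
    using Suc L1_translation_continuous_indicator_Icc[of "a n" "b n"]
    by (auto simp: lessThan_Suc Un_commute emeasure_lborel_Icc_eq
        intro!: L1_translation_continuous_indicator_Un)
qed

lemma open_inner_approx_Union_Icc:
  assumes U: "open U" "emeasure lborel U < \<infinity>" and e: "e > 0"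
  obtains n :: nat and a b :: "nat \<Rightarrow> real"
  where "(\<Union>i<n. {a i..b i}) \<subseteq> U" "measure lborel (U - (\<Union>i<n. {a i..b i})) < e"
proof (cases "U = {}")
  case True
  then show ?thesis using e by (intro that[where n=0]) auto
next
  case False
  obtain D where D: "countable D" "D \<subseteq> Pow U" "\<And>X. X \<in> D \<Longrightarrow> \<exists>a b. X = cbox a b" "\<Union>D = U"
    using open_countable_Union_open_cbox[OF U(1)] by metis
  have "D \<noteq> {}" using False D(4) by auto
  then have range_D: "range (from_nat_into D) = D" and in_D: "\<And>i. from_nat_into D i \<in> D"
    using D(1) by (auto intro: range_from_nat_into from_nat_into)
  obtain a b where ab: "\<And>i. from_nat_into D i = {a i..b i}"
    using D(3)[OF in_D] by (metis cbox_interval)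
  define C where "C n = (\<Union>i<n. {a i..b i})" for n
  have C_U: "C n \<subseteq> U" for n using in_D D(2) by (auto simp: C_def ab[symmetric])
  have U_C: "(\<Union>n. C n) = U"
  proof
    show "U \<subseteq> (\<Union>n. C n)"
      using D(4) range_D ab by (force simp: C_def intro: exI[of _ "Suc _"])
  qed (use C_U in auto)
  have "incseq C"
    unfolding incseq_def C_def by (intro allI impI UN_mono) auto
  moreover have "range C \<subseteq> sets lborel" by (auto simp: C_def)
  ultimately have "(\<lambda>n. emeasure lborel (C n)) \<longlonglongrightarrow> emeasure lborel U"
    using Lim_emeasure_incseq[of C lborel] by (simp add: U_C)
  then have "(\<lambda>n. measure lborel (C n)) \<longlonglongrightarrow> measure lborel U"
    using U(2) unfolding measure_def by (intro tendsto_enn2real) auto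
  from LIMSEQ_D[OF this e] obtain n where "norm (measure lborel (C n) - measure lborel U) < e"
    by (meson order_refl)
  then have n: "measure lborel U - measure lborel (C n) < e" by simp
  have "emeasure lborel (C n) \<le> emeasure lborel U"
    using C_U U(1) by (intro emeasure_mono) auto
  then have "emeasure lborel (C n) < \<infinity>"
    using U(2) by (rule le_less_trans)
  then have "measure lborel (U - C n) = measure lborel U - measure lborel (C n)"
    using C_U[of n] U by (intro measure_Diff) (auto simp: C_def less_top)
  then show ?thesis
    using C_U[of n] n by (intro that[of a b n]) (auto simp: C_def)
qed

lemma L1_translation_continuous_indicator_open:
  assumes U: "open U" "emeasure lborel U < \<infinity>"
  shows "L1_translation_continuous (indicator U :: real \<Rightarrow> real)"
proof (rule L1_translation_continuous_approx)
  show "integrable lborel (indicat_real U)" using U by (intro integrable_real_indicator) auto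
  fix e :: real assume e: "e > 0"
  obtain n :: nat and a b :: "nat \<Rightarrow> real" where C_U: "(\<Union>i<n. {a i..b i}) \<subseteq> U"
    and small: "measure lborel (U - (\<Union>i<n. {a i..b i})) < e"
    by (rule open_inner_approx_Union_Icc[OF U e])
  define C where "C = (\<Union>i<n. {a i..b i})"
  have "emeasure lborel C \<le> emeasure lborel U"
    using C_U U(1) unfolding C_def by (intro emeasure_mono) auto
  then have "emeasure lborel C < \<infinity>"
    using U(2) by (rule le_less_trans)
  then have "integrable lborel (indicat_real C)"
    by (intro integrable_real_indicator) (auto simp: C_def)
  moreover have "(\<integral>s. \<bar>indicat_real U s - indicat_real C s\<bar> \<partial>lborel) = measure lborel (U - C)"
  proof -
    have "\<bar>indicat_real U s - indicat_real C s\<bar> = indicat_real (U - C) s" for s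
      using C_U unfolding C_def[symmetric] by (auto split: split_indicator)
    then show ?thesis by simp
  qed
  moreover have "L1_translation_continuous (indicat_real C)"
    unfolding C_def by (rule L1_translation_continuous_indicator_Union_Icc)
  moreover have "measure lborel (U - C) < e"
    using small by (simp add: C_def)
  ultimately show "\<exists>f. integrable lborel f \<and> L1_translation_continuous f
      \<and> (\<integral>s. \<bar>indicat_real U s - f s\<bar> \<partial>lborel) < e"
    by (intro exI[of _ "indicat_real C"]) simp
qed

lemma L1_translation_continuous_indicator:
  assumes A: "A \<in> sets borel" "emeasure lborel A < \<infinity>"
  shows "L1_translation_continuous (indicator A :: real \<Rightarrow> real)"
proof (rule L1_translation_continuous_approx)
  show "integrable lborel (indicat_real A)" using A by (intro integrable_real_indicator) auto
  fix e :: real assume e: "e > 0"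
  obtain U where U: "open U" "A \<subseteq> U" "emeasure lborel (U - A) < e"
    using outer_regular_lborel[OF A(1) e] by blast
  have UA_fin: "emeasure lborel (U - A) < \<infinity>" using U(3) less_top by fastforce
  have "emeasure lborel U \<le> emeasure lborel A + emeasure lborel (U - A)"
    using A U by (intro emeasure_subadditive[THEN order_trans[rotated]]) (auto intro!: emeasure_mono)
  also have "\<dots> < \<infinity>" using A UA_fin by (simp add: ennreal_add_less_top)
  finally have U_fin: "emeasure lborel U < \<infinity>" .
  have "(\<integral>s. \<bar>indicat_real A s - indicat_real U s\<bar> \<partial>lborel) = (\<integral>s. indicat_real (U - A) s \<partial>lborel)"
    using U by (intro Bochner_Integration.integral_cong) (auto split: split_indicator)
  also have "\<dots> = measure lborel (U - A)" by simp
  also have "\<dots> < e"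
    using U(3) UA_fin e by (simp add: measure_def enn2real_less_iff less_top[symmetric])
  finally show "\<exists>f. integrable lborel f \<and> L1_translation_continuous f
      \<and> (\<integral>s. \<bar>indicat_real A s - f s\<bar> \<partial>lborel) < e"
    using U U_fin L1_translation_continuous_indicator_open[OF U(1) U_fin]
    by (intro exI[of _ "indicat_real U"]) (auto intro!: integrable_real_indicator)
qed

theorem integrable_imp_L1_translation_continuous:
  assumes "integrable lborel (h :: real \<Rightarrow> real)"
  shows "L1_translation_continuous h"
  using assms
proof (induct rule: integrable_induct)
  case (base A c)
  then show ?case
    using L1_translation_continuous_mult_const[OF L1_translation_continuous_indicator[of A], of c]
    by simp
next
  case (add f g)
  then show ?case by (blast intro: L1_translation_continuous_add)
next
  case (lim f s)
  show ?case
  proof (rule L1_translation_continuous_approx[OF lim(5)])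
    fix e :: real assume e: "e > 0"
    have "(\<lambda>i. \<integral>x. \<bar>f x - s i x\<bar> \<partial>lborel) \<longlonglongrightarrow> (\<integral>(x::real). 0 \<partial>lborel)"
    proof (rule Bochner_Integration.integral_dominated_convergence[where w="\<lambda>x. 3 * \<bar>f x\<bar>" and f="\<lambda>x. 0" and s="\<lambda>i x. \<bar>f x - s i x\<bar>"])
      show "AE x in lborel. (\<lambda>i. \<bar>f x - s i x\<bar>) \<longlonglongrightarrow> 0"
      proof (rule AE_I2)
        fix x :: real
        have "(\<lambda>i. \<bar>f x - s i x\<bar>) \<longlonglongrightarrow> \<bar>f x - f x\<bar>"
          by (intro tendsto_intros lim(3)) simp
        then show "(\<lambda>i. \<bar>f x - s i x\<bar>) \<longlonglongrightarrow> 0" by simp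
      qed
      show "AE x in lborel. norm \<bar>f x - s i x\<bar> \<le> 3 * \<bar>f x\<bar>" for i
      proof (rule AE_I2)
        fix x :: real
        have "norm (s i x) \<le> 2 * norm (f x)" using lim(4) by simp
        then show "norm \<bar>f x - s i x\<bar> \<le> 3 * \<bar>f x\<bar>" by simp
      qed
    qed (use lim in auto)
    then obtain i where "\<bar>(\<integral>x. \<bar>f x - s i x\<bar> \<partial>lborel) - 0\<bar> < e"
      using e by (auto dest!: LIMSEQ_D[where r=e])
    then show "\<exists>g. integrable lborel g \<and> L1_translation_continuous g
        \<and> (\<integral>x. \<bar>f x - g x\<bar> \<partial>lborel) < e"
      using lim(1,2) by (intro exI[of _ "s i"]) auto
  qed
qed

section \<open>Extraction of uniformly convergent subsequences\<close>

lemma uniformly_small_on_compact_if_subseq_tendsto: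
  fixes D :: "nat \<Rightarrow> real \<Rightarrow> real"
  assumes S: "compact S" and e: "e > 0"
    and H: "\<And>r t l. strict_mono r \<Longrightarrow> (\<forall>k. t k \<in> S) \<Longrightarrow> t \<longlonglongrightarrow> l \<Longrightarrow> l \<in> S
              \<Longrightarrow> (\<lambda>k. D (r k) (t k)) \<longlonglongrightarrow> 0"
  shows "\<exists>N. \<forall>n\<ge>N. \<forall>t\<in>S. \<bar>D n t\<bar> < e"
proof (rule ccontr)
  assume neg: "\<not> ?thesis"
  define Q where "Q = {n. \<exists>t\<in>S. e \<le> \<bar>D n t\<bar>}"
  have Q: "infinite Q"
    using neg unfolding Q_def infinite_nat_iff_unbounded_le by (auto simp: not_less)
  define r where "r = enumerate Q"
  have r: "strict_mono r" unfolding r_def by (rule strict_mono_enumerate[OF Q])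
  have "\<forall>k. \<exists>t\<in>S. e \<le> \<bar>D (r k) t\<bar>"
    using enumerate_in_set[OF Q] unfolding r_def Q_def by auto
  then obtain t where t: "\<And>k. t k \<in> S" "\<And>k. e \<le> \<bar>D (r k) (t k)\<bar>" by metis
  obtain l q where lq: "l \<in> S" "strict_mono q" "(t \<circ> q) \<longlonglongrightarrow> l"
    using seq_compactE[OF compact_imp_seq_compact[OF S], of t] t(1) by blast
  have "(\<lambda>k. D ((r \<circ> q) k) ((t \<circ> q) k)) \<longlonglongrightarrow> 0"
    using lq t(1) strict_mono_o[OF r lq(2)] by (intro H) (auto simp: comp_def)
  then obtain k where "\<bar>D ((r \<circ> q) k) ((t \<circ> q) k)\<bar> < e"
    using LIMSEQ_D[OF _ e] by fastforce
  then show False using t(2)[of "q k"] by simp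
qed

lemma Arzela_Ascoli_uniformly_Cauchy:
  fixes F :: "nat \<Rightarrow> 'a::euclidean_space \<Rightarrow> 'b::{real_normed_vector,heine_borel}"
  assumes "compact S" and "\<And>n x. x \<in> S \<Longrightarrow> norm (F n x) \<le> M"
    and "\<And>x e. x \<in> S \<Longrightarrow> 0 < e
           \<Longrightarrow> \<exists>d>0. \<forall>n y. y \<in> S \<and> norm (x - y) < d \<longrightarrow> norm (F n x - F n y) < e"
  obtains k where "strict_mono k" "uniformly_Cauchy_on S (\<lambda>n. F (k n))"
proof -
  obtain g k where k: "strict_mono (k :: nat \<Rightarrow> nat)"
    and lim: "\<And>e. 0 < e \<Longrightarrow> \<exists>N. \<forall>n x. n \<ge> N \<and> x \<in> S \<longrightarrow> norm (F (k n) x - g x) < e"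
    using Arzela_Ascoli[OF assms] by metis
  have "uniform_limit S (\<lambda>n. F (k n)) g sequentially"
    unfolding uniform_limit_sequentially_iff dist_norm using lim by blast
  then show ?thesis
    using k uniformly_convergent_Cauchy that unfolding uniformly_convergent_on_def by blast
qed

lemma diagonal_uniformly_Cauchy_subseq:
  fixes F :: "nat \<Rightarrow> 'a \<Rightarrow> 'b::metric_space" and S :: "nat \<Rightarrow> 'a set"
  assumes sub: "\<And>i (r :: nat \<Rightarrow> nat). \<exists>k. strict_mono k \<and> uniformly_Cauchy_on (S i) (\<lambda>n. F (r (k n)))"
  obtains k where "strict_mono k" "\<And>i. uniformly_Cauchy_on (S i) (\<lambda>n. F (k n))"
proof -
  define P where "P i r \<longleftrightarrow> uniformly_Cauchy_on (S i) (\<lambda>n. F (r n))" for i and r :: "nat \<Rightarrow> nat"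
  obtain k where "strict_mono k" "\<And>i. P i (id \<circ> k)"
  proof (rule subsequence_diagonalization_lemma[of P id])
    show "\<exists>k. strict_mono k \<and> P i (r \<circ> k)" for i and r :: "nat \<Rightarrow> nat"
      using sub[of i r] by (simp add: P_def comp_def)
  next
    fix i and r k1 k2 :: "nat \<Rightarrow> nat" and N
    assume P1: "P i (r \<circ> k1)" and k2: "\<And>j. N \<le> j \<Longrightarrow> \<exists>j'. j \<le> j' \<and> k2 j = k1 j'"
    show "P i (r \<circ> k2)"
      unfolding P_def uniformly_Cauchy_on_def
    proof (intro allI impI)
      fix e :: real assume "e > 0"
      then obtain M where M: "\<And>x m n. x \<in> S i \<Longrightarrow> M \<le> m \<Longrightarrow> M \<le> n \<Longrightarrow> dist (F (r (k1 m)) x) (F (r (k1 n)) x) < e"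
        using P1 unfolding P_def uniformly_Cauchy_on_def by fastforce
      show "\<exists>M. \<forall>x\<in>S i. \<forall>m\<ge>M. \<forall>n\<ge>M. dist (F ((r \<circ> k2) m) x) (F ((r \<circ> k2) n) x) < e"
      proof (intro exI ballI allI impI)
        fix x m n assume "x \<in> S i" "max N M \<le> m" "max N M \<le> n"
        moreover obtain m' n' where "m \<le> m'" "k2 m = k1 m'" "n \<le> n'" "k2 n = k1 n'"
          using k2 \<open>max N M \<le> m\<close> \<open>max N M \<le> n\<close> by (metis max.boundedE)
        ultimately show "dist (F ((r \<circ> k2) m) x) (F ((r \<circ> k2) n) x) < e" by (auto intro!: M)
      qed
    qed
  qed auto
  then show ?thesis using that by (simp add: P_def)
qed

section \<open>The weighted space \<open>\<XX>\<close>\<close>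

locale exp_weighted_space =
  fixes lam nu :: real
  assumes lam_pos: "0 < lam" and nu_pos: "0 < nu"
begin

definition weight :: "real \<Rightarrow> real" where
  "weight t = (if t \<le> 0 then exp (- (lam / 2) * t) else exp (- nu * t))"

definition weighted_bounded :: "(real \<Rightarrow> real) \<Rightarrow> bool" where
  "weighted_bounded h \<longleftrightarrow> (\<exists>C. \<forall>t. weight t * \<bar>h t\<bar> \<le> C)"

lemma weight_pos: "weight t > 0"
  by (simp add: weight_def)

lemma inverse_weight_le: "1 / weight t \<le> exp (nu * \<bar>t\<bar>)"
proof (cases "t \<le> 0")
  case True
  then have "1 / weight t = exp ((lam / 2) * t)" by (simp add: weight_def exp_minus field_simps)
  also have "\<dots> \<le> exp (nu * \<bar>t\<bar>)"
    using True lam_pos nu_pos mult_nonneg_nonpos[of "lam / 2" t] mult_nonneg_nonneg[of nu "\<bar>t\<bar>"]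
    by simp
  finally show ?thesis .
qed (simp add: weight_def exp_minus field_simps)

lemma weight_le: "weight t \<le> exp ((lam / 2) * \<bar>t\<bar>)"
proof (cases "t \<le> 0")
  case False
  then have "weight t \<le> 1" using nu_pos by (simp add: weight_def)
  also have "1 \<le> exp ((lam / 2) * \<bar>t\<bar>)" using lam_pos by simp
  finally show ?thesis .
qed (simp add: weight_def)

lemma weighted_bounded_iff_bdd_above:
  "weighted_bounded h \<longleftrightarrow> bdd_above ((\<lambda>s. exp (- (lam / 2) * s) * \<bar>h s\<bar>) ` {..0})
      \<and> bdd_above ((\<lambda>s. exp (- nu * s) * \<bar>h s\<bar>) ` {0..})"
proof
  assume "weighted_bounded h"
  then obtain C where C: "\<And>t. weight t * \<bar>h t\<bar> \<le> C" by (auto simp: weighted_bounded_def)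
  then have "exp (- (lam / 2) * s) * \<bar>h s\<bar> \<le> C" if "s \<le> 0" for s
    using C[of s] that by (simp add: weight_def)
  moreover have "exp (- nu * s) * \<bar>h s\<bar> \<le> C" if "s \<ge> 0" for s
    using C[of s] that by (cases "s = 0") (auto simp: weight_def)
  ultimately show "bdd_above ((\<lambda>s. exp (- (lam / 2) * s) * \<bar>h s\<bar>) ` {..0})
      \<and> bdd_above ((\<lambda>s. exp (- nu * s) * \<bar>h s\<bar>) ` {0..})"
    by (auto simp: bdd_above_def)
next
  assume "bdd_above ((\<lambda>s. exp (- (lam / 2) * s) * \<bar>h s\<bar>) ` {..0})
      \<and> bdd_above ((\<lambda>s. exp (- nu * s) * \<bar>h s\<bar>) ` {0..})"
  then obtain C1 C2 where C1: "\<And>s. s \<le> 0 \<Longrightarrow> exp (- (lam / 2) * s) * \<bar>h s\<bar> \<le> C1"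
    and C2: "\<And>s. s \<ge> 0 \<Longrightarrow> exp (- nu * s) * \<bar>h s\<bar> \<le> C2"
    by (auto simp: bdd_above_def)
  have "weight t * \<bar>h t\<bar> \<le> max C1 C2" for t
    using C1[of t] C2[of t] by (cases "t \<le> 0") (auto simp: weight_def)
  then show "weighted_bounded h" by (auto simp: weighted_bounded_def)
qed

lemma Xsp_iff: "h \<in> Xsp lam nu \<longleftrightarrow> continuous_on UNIV h \<and> weighted_bounded h"
  unfolding Xsp_def weighted_bounded_iff_bdd_above by auto

lemma weighted_bounded_diff:
  assumes "weighted_bounded f" "weighted_bounded g"
  shows "weighted_bounded (\<lambda>t. f t - g t)"
proof -
  obtain C1 C2 where "\<And>t. weight t * \<bar>f t\<bar> \<le> C1" "\<And>t. weight t * \<bar>g t\<bar> \<le> C2"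
    using assms by (auto simp: weighted_bounded_def)
  then have "weight t * \<bar>f t - g t\<bar> \<le> C1 + C2" for t
    using weight_pos[of t] abs_triangle_ineq4[of "f t" "g t"]
    by (smt (verit, best) mult_left_mono distrib_left)
  then show ?thesis by (auto simp: weighted_bounded_def)
qed

lemma weight_mult_abs_le_wnorm:
  assumes "weighted_bounded h"
  shows "weight t * \<bar>h t\<bar> \<le> wnorm lam nu h"
    and wnorm_nonneg: "wnorm lam nu h \<ge> 0"
proof -
  have bdd: "bdd_above ((\<lambda>s. exp (- (lam / 2) * s) * \<bar>h s\<bar>) ` {..0})"
    "bdd_above ((\<lambda>s. exp (- nu * s) * \<bar>h s\<bar>) ` {0..})"
    using assms by (auto simp: weighted_bounded_iff_bdd_above)
  have neg: "exp (- (lam / 2) * s) * \<bar>h s\<bar> \<le> (SUP s\<in>{..0}. exp (- (lam / 2) * s) * \<bar>h s\<bar>)"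
    if "s \<le> 0" for s
    using that bdd(1) by (intro cSUP_upper) auto
  have pos: "exp (- nu * s) * \<bar>h s\<bar> \<le> (SUP s\<in>{0..}. exp (- nu * s) * \<bar>h s\<bar>)" if "s \<ge> 0" for s
    using that bdd(2) by (intro cSUP_upper) auto
  show "weight t * \<bar>h t\<bar> \<le> wnorm lam nu h"
    using neg[of t] pos[of t] neg[of 0] pos[of 0] by (cases "t \<le> 0") (auto simp: weight_def wnorm_def)
  show "wnorm lam nu h \<ge> 0"
    using neg[of 0] pos[of 0] by (simp add: wnorm_def)
qed

lemma wnorm_le:
  assumes "\<And>t. weight t * \<bar>h t\<bar> \<le> C"
  shows "wnorm lam nu h \<le> 2 * C"
proof -
  have "(SUP s\<in>{..0}. exp (- (lam / 2) * s) * \<bar>h s\<bar>) \<le> C"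
  proof (intro cSUP_least)
    show "exp (- (lam / 2) * s) * \<bar>h s\<bar> \<le> C" if "s \<in> {..0}" for s
      using assms[of s] that by (simp add: weight_def)
  qed auto
  moreover have "(SUP s\<in>{0..}. exp (- nu * s) * \<bar>h s\<bar>) \<le> C"
  proof (intro cSUP_least)
    show "exp (- nu * s) * \<bar>h s\<bar> \<le> C" if "s \<in> {0..}" for s
      using assms[of s] that by (cases "s = 0") (auto simp: weight_def)
  qed auto
  ultimately show ?thesis by (simp add: wnorm_def)
qed

lemma abs_le_wnorm_mult_exp:
  assumes "weighted_bounded h"
  shows "\<bar>h t\<bar> \<le> wnorm lam nu h * exp (nu * \<bar>t\<bar>)"
proof -
  have "\<bar>h t\<bar> = (weight t * \<bar>h t\<bar>) * (1 / weight t)" using weight_pos[of t] by simp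
  also have "\<dots> \<le> wnorm lam nu h * exp (nu * \<bar>t\<bar>)"
    using weight_mult_abs_le_wnorm[OF assms] inverse_weight_le[of t] weight_pos[of t]
    by (intro mult_mono) auto
  finally show ?thesis .
qed

lemma wnorm_tendsto_zeroI:
  assumes "\<And>e. e > 0 \<Longrightarrow> \<exists>N. \<forall>n\<ge>N. \<forall>t. weight t * \<bar>h n t\<bar> \<le> e"
  shows "(\<lambda>n. wnorm lam nu (h n)) \<longlonglongrightarrow> 0"
proof (rule LIMSEQ_I)
  fix r :: real assume r: "r > 0"
  then obtain N where N: "\<And>n t. n \<ge> N \<Longrightarrow> weight t * \<bar>h n t\<bar> \<le> r / 3"
    using assms[of "r / 3"] by auto
  have "\<bar>wnorm lam nu (h n)\<bar> < r" if "n \<ge> N" for n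
  proof -
    have "weighted_bounded (h n)"
      using N[OF that] unfolding weighted_bounded_def by blast
    then show ?thesis
      using wnorm_le[of "h n", OF N[OF that]] wnorm_nonneg[of "h n"] r by simp
  qed
  then show "\<exists>N. \<forall>n\<ge>N. norm (wnorm lam nu (h n) - 0) < r" by auto
qed

lemma tendsto_of_wnorm_tendsto:
  assumes "\<And>n. weighted_bounded (\<lambda>t. f n t - \<phi> t)"
    and "(\<lambda>n. wnorm lam nu (\<lambda>t. f n t - \<phi> t)) \<longlonglongrightarrow> 0"
    and "isCont \<phi> y" and "x \<longlonglongrightarrow> y"
  shows "(\<lambda>n. f n (x n)) \<longlonglongrightarrow> \<phi> y"
proof -
  have "(\<lambda>n. wnorm lam nu (\<lambda>t. f n t - \<phi> t) * exp (nu * \<bar>x n\<bar>)) \<longlonglongrightarrow> 0 * exp (nu * \<bar>y\<bar>)"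
    using assms(2,4) by (intro tendsto_intros)
  then have "(\<lambda>n. wnorm lam nu (\<lambda>t. f n t - \<phi> t) * exp (nu * \<bar>x n\<bar>)) \<longlonglongrightarrow> 0"
    by simp
  then have "(\<lambda>n. f n (x n) - \<phi> (x n)) \<longlonglongrightarrow> 0"
    by (rule Lim_null_comparison[rotated])
      (use abs_le_wnorm_mult_exp[OF assms(1)] in \<open>auto intro!: always_eventually\<close>)
  moreover have "(\<lambda>n. \<phi> (x n)) \<longlonglongrightarrow> \<phi> y"
    using assms(3,4) by (rule isCont_tendsto_compose)
  ultimately show ?thesis
    using tendsto_add by fastforce
qed

lemma weighted_Cauchy_imp_weighted_uniform_limit:
  fixes f :: "nat \<Rightarrow> real \<Rightarrow> real"
  assumes Cauchy: "\<And>e. e > 0 \<Longrightarrow> \<exists>N. \<forall>m\<ge>N. \<forall>n\<ge>N. \<forall>t. weight t * \<bar>f m t - f n t\<bar> < e"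
  obtains \<phi> where "\<And>e. e > 0 \<Longrightarrow> \<exists>N. \<forall>n\<ge>N. \<forall>t. weight t * \<bar>f n t - \<phi> t\<bar> \<le> e"
proof -
  have "Cauchy (\<lambda>n. f n t)" for t
  proof (rule CauchyI)
    fix e :: real assume "e > 0"
    then obtain N where N: "\<forall>m\<ge>N. \<forall>n\<ge>N. \<forall>t'. weight t' * \<bar>f m t' - f n t'\<bar> < weight t * e"
      using Cauchy[of "weight t * e"] weight_pos[of t] by auto
    have "\<bar>f m t - f n t\<bar> < e" if "m \<ge> N" "n \<ge> N" for m n
      using N that weight_pos[of t] by (meson mult_less_cancel_left_pos)
    then show "\<exists>M. \<forall>m\<ge>M. \<forall>n\<ge>M. norm (f m t - f n t) < e"
      by auto
  qed
  then obtain \<phi> where lim: "\<And>t. (\<lambda>n. f n t) \<longlonglongrightarrow> \<phi> t"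
    unfolding Cauchy_convergent_iff convergent_def by metis
  have "\<exists>N. \<forall>n\<ge>N. \<forall>t. weight t * \<bar>f n t - \<phi> t\<bar> \<le> e" if e: "e > 0" for e
  proof -
    obtain N where N: "\<And>m n t. m \<ge> N \<Longrightarrow> n \<ge> N \<Longrightarrow> weight t * \<bar>f m t - f n t\<bar> < e"
      using Cauchy[OF e] by blast
    have "weight t * \<bar>f n t - \<phi> t\<bar> \<le> e" if n: "n \<ge> N" for n t
    proof -
      have "(\<lambda>m. weight t * \<bar>f n t - f m t\<bar>) \<longlonglongrightarrow> weight t * \<bar>f n t - \<phi> t\<bar>"
        by (intro tendsto_intros lim)
      moreover have "\<forall>m\<ge>N. weight t * \<bar>f n t - f m t\<bar> \<le> e"
        using N n by (meson less_imp_le)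
      ultimately show ?thesis
        by (intro LIMSEQ_le_const2[where X="\<lambda>m. weight t * \<bar>f n t - f m t\<bar>"]) auto
    qed
    then show ?thesis by auto
  qed
  then show ?thesis by (rule that)
qed

lemma continuous_on_weighted_uniform_limit:
  fixes f :: "nat \<Rightarrow> real \<Rightarrow> real"
  assumes cont: "\<And>n. continuous_on UNIV (f n)"
    and uniform: "\<And>e. e > 0 \<Longrightarrow> \<exists>N. \<forall>n\<ge>N. \<forall>t. weight t * \<bar>f n t - \<phi> t\<bar> \<le> e"
  shows "continuous_on UNIV \<phi>"
proof -
  have "continuous_on {t0 - 1<..<t0 + 1} \<phi>" for t0
  proof (rule uniform_limit_theorem[where F=sequentially])
    show "\<forall>\<^sub>F n in sequentially. continuous_on {t0 - 1<..<t0 + 1} (f n)"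
      by (intro always_eventually allI continuous_on_subset[OF cont]) auto
    show "uniform_limit {t0 - 1<..<t0 + 1} f \<phi> sequentially"
      unfolding uniform_limit_sequentially_iff
    proof (intro allI impI)
      fix e :: real assume e: "e > 0"
      define c where "c = exp (nu * (\<bar>t0\<bar> + 1))"
      have c: "c > 0" by (simp add: c_def)
      obtain N where N: "\<And>n t. n \<ge> N \<Longrightarrow> weight t * \<bar>f n t - \<phi> t\<bar> \<le> e / (2 * c)"
        using uniform[of "e / (2 * c)"] e c by auto
      have "dist (f n x) (\<phi> x) < e" if "n \<ge> N" "x \<in> {t0 - 1<..<t0 + 1}" for n x
      proof -
        have "\<bar>f n x - \<phi> x\<bar> = (weight x * \<bar>f n x - \<phi> x\<bar>) * (1 / weight x)"
          using weight_pos[of x] by simp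
        also have "\<dots> \<le> (e / (2 * c)) * exp (nu * \<bar>x\<bar>)"
          using N[OF that(1), of x] inverse_weight_le[of x] weight_pos[of x] e c
          by (intro mult_mono) auto
        also have "\<dots> \<le> (e / (2 * c)) * c"
          using that(2) nu_pos e c unfolding c_def by (intro mult_left_mono) auto
        also have "\<dots> < e" using e c by simp
        finally show ?thesis by (simp add: dist_real_def)
      qed
      then show "\<exists>N. \<forall>n\<ge>N. \<forall>x\<in>{t0 - 1<..<t0 + 1}. dist (f n x) (\<phi> x) < e" by blast
    qed
  qed auto
  then have "isCont \<phi> t0" for t0
    by (rule continuous_on_interior[of "{t0 - 1<..<t0 + 1}"]) (auto simp: interior_open)
  then show ?thesis
    by (simp add: continuous_at_imp_continuous_on)
qed

lemma Xsp_complete: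
  assumes f: "\<And>n. f n \<in> Xsp lam nu"
    and Cauchy: "\<And>e. e > 0 \<Longrightarrow> \<exists>N. \<forall>m\<ge>N. \<forall>n\<ge>N. wnorm lam nu (\<lambda>t. f m t - f n t) < e"
  shows "\<exists>\<phi>\<in>Xsp lam nu. (\<lambda>n. wnorm lam nu (\<lambda>t. f n t - \<phi> t)) \<longlonglongrightarrow> 0"
proof -
  have bdd: "weighted_bounded (f n)" and cont: "continuous_on UNIV (f n)" for n
    using f by (auto simp: Xsp_iff)
  obtain \<phi> where uniform: "\<And>e. e > 0 \<Longrightarrow> \<exists>N. \<forall>n\<ge>N. \<forall>t. weight t * \<bar>f n t - \<phi> t\<bar> \<le> e"
  proof (rule weighted_Cauchy_imp_weighted_uniform_limit)
    show "\<exists>N. \<forall>m\<ge>N. \<forall>n\<ge>N. \<forall>t. weight t * \<bar>f m t - f n t\<bar> < e" if "e > 0" for e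
      using Cauchy[OF that] weight_mult_abs_le_wnorm[OF weighted_bounded_diff[OF bdd bdd]]
      by (meson order_le_less_trans)
  qed (rule that)
  have "weighted_bounded \<phi>"
  proof -
    obtain N where N: "\<And>t. weight t * \<bar>f N t - \<phi> t\<bar> \<le> 1" using uniform[of 1] by auto
    obtain C where C: "\<And>t. weight t * \<bar>f N t\<bar> \<le> C" using bdd[of N] by (auto simp: weighted_bounded_def)
    have "weight t * \<bar>\<phi> t\<bar> \<le> weight t * (\<bar>f N t - \<phi> t\<bar> + \<bar>f N t\<bar>)" for t
      using weight_pos[of t] by (intro mult_left_mono) auto
    then have "weight t * \<bar>\<phi> t\<bar> \<le> 1 + C" for t
      using N[of t] C[of t] by (smt (verit) distrib_left)
    then show ?thesis by (auto simp: weighted_bounded_def)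
  qed
  with continuous_on_weighted_uniform_limit[OF cont uniform] have "\<phi> \<in> Xsp lam nu"
    by (simp add: Xsp_iff)
  moreover have "(\<lambda>n. wnorm lam nu (\<lambda>t. f n t - \<phi> t)) \<longlonglongrightarrow> 0"
    using uniform by (rule wnorm_tendsto_zeroI)
  ultimately show ?thesis by blast
qed

end

section \<open>The cone \<open>\<KK>\<close>\<close>

locale Kset_setting = exp_weighted_space lam nu
  for \<delta> lam eps nu :: real +
  assumes delta_pos: "0 < \<delta>" and eps_pos: "0 < eps" and nu_eq: "nu = lam + eps"
begin

lemma phi_minus_nonneg: "phi_minus \<delta> lam eps t \<ge> 0"
  using delta_pos eps_pos by (auto simp: phi_minus_def mult_nonneg_nonpos intro!: mult_nonneg_nonneg)

lemma weight_mult_exp_le_one: "weight t * exp (lam * t) \<le> 1"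
proof (cases "t \<le> 0")
  case True
  then have "weight t * exp (lam * t) = exp ((lam / 2) * t)"
    by (simp add: weight_def exp_add[symmetric] algebra_simps)
  then show ?thesis using True lam_pos by (simp add: mult_nonneg_nonpos)
next
  case False
  then have "weight t * exp (lam * t) = exp (- eps * t)"
    unfolding weight_def by (simp add: nu_eq exp_add[symmetric] algebra_simps)
  then show ?thesis using False eps_pos by simp
qed

lemma weight_mult_abs_le_delta:
  assumes "\<And>t. phi_minus \<delta> lam eps t \<le> f t \<and> f t \<le> phi_plus \<delta> lam t"
  shows "weight t * \<bar>f t\<bar> \<le> \<delta>"
proof -
  have "\<bar>f t\<bar> \<le> \<delta> * exp (lam * t)"
    using assms[of t] phi_minus_nonneg[of t] by (simp add: phi_plus_def)
  then have "weight t * \<bar>f t\<bar> \<le> \<delta> * (weight t * exp (lam * t))"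
    using weight_pos[of t] by (simp add: mult_left_mono)
  also have "\<dots> \<le> \<delta>"
    using weight_mult_exp_le_one[of t] delta_pos by (simp add: mult_left_le)
  finally show ?thesis .
qed

lemma Kset_iff:
  "f \<in> Kset \<delta> lam eps nu \<longleftrightarrow>
     continuous_on UNIV f \<and> (\<forall>t. phi_minus \<delta> lam eps t \<le> f t \<and> f t \<le> phi_plus \<delta> lam t)"
  unfolding Kset_def Xsp_iff weighted_bounded_def using weight_mult_abs_le_delta by blast

lemma Kset_nonneg: "f \<in> Kset \<delta> lam eps nu \<Longrightarrow> f t \<ge> 0"
  using phi_minus_nonneg[of t] by (auto simp: Kset_iff intro: order_trans)

lemma Kset_abs_le: "f \<in> Kset \<delta> lam eps nu \<Longrightarrow> \<bar>f t\<bar> \<le> \<delta> * exp (lam * t)"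
  using Kset_nonneg[of f t] by (auto simp: Kset_iff phi_plus_def)

lemma Kset_weighted_bounded: "f \<in> Kset \<delta> lam eps nu \<Longrightarrow> weighted_bounded f"
  by (simp add: Kset_def Xsp_iff)

lemma Kset_closed:
  assumes f: "\<And>n. f n \<in> Kset \<delta> lam eps nu" and \<phi>: "\<phi> \<in> Xsp lam nu"
    and lim: "(\<lambda>n. wnorm lam nu (\<lambda>t. f n t - \<phi> t)) \<longlonglongrightarrow> 0"
  shows "\<phi> \<in> Kset \<delta> lam eps nu"
proof -
  have bdd: "weighted_bounded (\<lambda>t. f n t - \<phi> t)" for n
    using \<phi> by (intro weighted_bounded_diff Kset_weighted_bounded[OF f]) (simp add: Xsp_iff)
  have cont: "isCont \<phi> t" for t
    using \<phi> by (simp add: Xsp_iff continuous_on_eq_continuous_at)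
  have lim_t: "(\<lambda>n. f n t) \<longlonglongrightarrow> \<phi> t" for t
    using tendsto_of_wnorm_tendsto[OF bdd lim cont tendsto_const] .
  have "phi_minus \<delta> lam eps t \<le> \<phi> t" "\<phi> t \<le> phi_plus \<delta> lam t" for t
    using f by (auto simp: Kset_iff intro!: LIMSEQ_le_const[OF lim_t] LIMSEQ_le_const2[OF lim_t])
  then show ?thesis using \<phi> by (simp add: Kset_def)
qed

lemma Kset_wnorm_le: "\<phi> \<in> Kset \<delta> lam eps nu \<Longrightarrow> wnorm lam nu \<phi> \<le> 2 * \<delta>"
  using wnorm_le weight_mult_abs_le_delta by (auto simp: Kset_iff)

lemma Kset_convex:
  assumes "\<phi> \<in> Kset \<delta> lam eps nu" "\<psi> \<in> Kset \<delta> lam eps nu" "0 \<le> a" "a \<le> 1"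
  shows "(\<lambda>t. a * \<phi> t + (1 - a) * \<psi> t) \<in> Kset \<delta> lam eps nu"
  unfolding Kset_iff
proof (intro conjI allI)
  show "continuous_on UNIV (\<lambda>t. a * \<phi> t + (1 - a) * \<psi> t)"
    using assms by (intro continuous_intros) (auto simp: Kset_iff)
  fix t
  have "phi_minus \<delta> lam eps t \<le> \<phi> t" "\<phi> t \<le> phi_plus \<delta> lam t"
    "phi_minus \<delta> lam eps t \<le> \<psi> t" "\<psi> t \<le> phi_plus \<delta> lam t"
    using assms by (auto simp: Kset_iff)
  then have "a * (\<phi> t - phi_minus \<delta> lam eps t) \<ge> 0" "(1 - a) * (\<psi> t - phi_minus \<delta> lam eps t) \<ge> 0"
    "a * (phi_plus \<delta> lam t - \<phi> t) \<ge> 0" "(1 - a) * (phi_plus \<delta> lam t - \<psi> t) \<ge> 0"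
    using assms(3,4) by auto
  then show "phi_minus \<delta> lam eps t \<le> a * \<phi> t + (1 - a) * \<psi> t"
    and "a * \<phi> t + (1 - a) * \<psi> t \<le> phi_plus \<delta> lam t"
    by (simp_all add: algebra_simps)
qed

lemma weight_mult_exp_tail:
  assumes e: "e > 0"
  obtains T where "\<And>t. T \<le> \<bar>t\<bar> \<Longrightarrow> 2 * \<delta> * (weight t * exp (lam * t)) \<le> e"
proof -
  define c where "c = min (lam / 2) eps"
  have c: "c > 0" using lam_pos eps_pos by (simp add: c_def)
  have decay: "weight t * exp (lam * t) \<le> exp (- c * \<bar>t\<bar>)" for t
  proof (cases "t \<le> 0")
    case True
    then have "weight t * exp (lam * t) = exp (- (lam / 2) * \<bar>t\<bar>)"
      by (simp add: weight_def exp_add[symmetric] algebra_simps)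
    moreover have "c * \<bar>t\<bar> \<le> (lam / 2) * \<bar>t\<bar>" by (rule mult_right_mono) (auto simp: c_def)
    ultimately show ?thesis by simp
  next
    case False
    then have "weight t * exp (lam * t) = exp (- eps * \<bar>t\<bar>)"
      unfolding weight_def by (simp add: exp_add[symmetric] nu_eq algebra_simps)
    moreover have "c * \<bar>t\<bar> \<le> eps * \<bar>t\<bar>" by (rule mult_right_mono) (auto simp: c_def)
    ultimately show ?thesis by simp
  qed
  define T where "T = ln (2 * \<delta> / e) / c"
  have "2 * \<delta> * (weight t * exp (lam * t)) \<le> e" if t: "T \<le> \<bar>t\<bar>" for t
  proof -
    have "ln (2 * \<delta> / e) \<le> c * \<bar>t\<bar>"
      using t c unfolding T_def by (simp add: pos_divide_le_eq mult.commute)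
    then have "exp (- c * \<bar>t\<bar>) \<le> exp (- ln (2 * \<delta> / e))" by simp
    also have "\<dots> = e / (2 * \<delta>)" using e delta_pos by (simp add: exp_minus)
    finally have "weight t * exp (lam * t) \<le> e / (2 * \<delta>)"
      using decay[of t] by simp
    then show ?thesis using delta_pos by (simp add: field_simps)
  qed
  then show ?thesis by (rule that)
qed

lemma Kset_wnorm_diff_le_if_close:
  assumes e: "e > 0"
  shows "\<exists>T. \<exists>\<eta>>0. \<forall>\<phi>\<in>Kset \<delta> lam eps nu. \<forall>\<psi>\<in>Kset \<delta> lam eps nu.
           (\<forall>t. \<bar>t\<bar> \<le> T \<longrightarrow> \<bar>\<phi> t - \<psi> t\<bar> \<le> \<eta>) \<longrightarrow> wnorm lam nu (\<lambda>t. \<phi> t - \<psi> t) \<le> e"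
proof -
  obtain T where T: "\<And>t. T \<le> \<bar>t\<bar> \<Longrightarrow> 2 * \<delta> * (weight t * exp (lam * t)) \<le> e / 2"
    using weight_mult_exp_tail[of "e / 2"] e by auto
  define c where "c = exp ((lam / 2) * T)"
  have c: "c > 0" by (simp add: c_def)
  have "wnorm lam nu (\<lambda>t. \<phi> t - \<psi> t) \<le> e"
    if \<phi>: "\<phi> \<in> Kset \<delta> lam eps nu" and \<psi>: "\<psi> \<in> Kset \<delta> lam eps nu"
      and close: "\<And>t. \<bar>t\<bar> \<le> T \<Longrightarrow> \<bar>\<phi> t - \<psi> t\<bar> \<le> e / (2 * c)" for \<phi> \<psi>
  proof -
    have "weight t * \<bar>\<phi> t - \<psi> t\<bar> \<le> e / 2" for t
    proof (cases "\<bar>t\<bar> \<le> T")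
      case True
      have "(lam / 2) * \<bar>t\<bar> \<le> (lam / 2) * T"
        using True lam_pos by (intro mult_left_mono) auto
      then have "weight t \<le> c"
        using weight_le[of t] unfolding c_def by (meson exp_le_cancel_iff order_trans)
      then have "weight t * \<bar>\<phi> t - \<psi> t\<bar> \<le> c * (e / (2 * c))"
        using close[OF True] weight_pos[of t] by (intro mult_mono) auto
      then show ?thesis using c by simp
    next
      case False
      have "\<bar>\<phi> t - \<psi> t\<bar> \<le> 2 * \<delta> * exp (lam * t)"
        using Kset_abs_le[OF \<phi>, of t] Kset_abs_le[OF \<psi>, of t] by simp
      then have "weight t * \<bar>\<phi> t - \<psi> t\<bar> \<le> weight t * (2 * \<delta> * exp (lam * t))"
        using weight_pos[of t] by (intro mult_left_mono) auto
      also have "\<dots> \<le> e / 2" using T[of t] False by (simp add: algebra_simps)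
      finally show ?thesis .
    qed
    then show ?thesis using wnorm_le by fastforce
  qed
  then show ?thesis
    using c e by (intro exI[of _ T] exI[of _ "e / (2 * c)"] conjI ballI impI) auto
qed

end

section \<open>The operator \<open>\<A>\<close>\<close>

lemma continuous_reflect_measurable:
  fixes \<phi> :: "real \<Rightarrow> real"
  assumes "continuous_on UNIV \<phi>"
  shows "(\<lambda>s. \<phi> (t - s)) \<in> borel_measurable borel"
proof -
  have [measurable]: "\<phi> \<in> borel_measurable borel"
    using assms by (rule borel_measurable_continuous_onI)
  show ?thesis by measurable
qed

locale kernel_operator = Kset_setting \<delta> lam eps nu
  for M :: "'b measure" and K :: "real \<Rightarrow> 'b \<Rightarrow> real" and g :: "real \<Rightarrow> 'b \<Rightarrow> real"
    and gd :: "'b \<Rightarrow> real" and B \<delta> lam eps nu :: real +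
  assumes finM: "finite_measure M"
    and K_meas: "(\<lambda>(s, \<tau>). K s \<tau>) \<in> borel_measurable (lborel \<Otimes>\<^sub>M M)"
    and K_int: "integrable (lborel \<Otimes>\<^sub>M M) (\<lambda>(s, \<tau>). K s \<tau>)"
    and K_nonneg: "\<And>s \<tau>. \<tau> \<in> space M \<Longrightarrow> K s \<tau> \<ge> 0"
    and K_pos: "\<And>\<tau>. \<tau> \<in> space M \<Longrightarrow> (\<integral>s. K s \<tau> \<partial>lborel) > 0"
    and g_meas: "(\<lambda>(v, \<tau>). g (max v 0) \<tau>) \<in> borel_measurable (borel \<Otimes>\<^sub>M M)"
    and g_nonneg: "\<And>v \<tau>. v \<ge> 0 \<Longrightarrow> \<tau> \<in> space M \<Longrightarrow> g v \<tau> \<ge> 0"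
    and g_cont: "\<And>\<tau>. \<tau> \<in> space M \<Longrightarrow> continuous_on {0..} (\<lambda>v. g v \<tau>)"
    and gd_pos: "\<And>\<tau>. \<tau> \<in> space M \<Longrightarrow> gd \<tau> > 0"
    and g_sub: "\<And>s \<tau>. s \<ge> 0 \<Longrightarrow> \<tau> \<in> space M \<Longrightarrow> g s \<tau> \<le> gd \<tau> * s"
    and g_bdd: "\<And>v \<tau>. v \<ge> 0 \<Longrightarrow> \<tau> \<in> space M \<Longrightarrow> g v \<tau> \<le> B"
    and B_nonneg: "B \<ge> 0"
    and g_lin: "\<And>s \<tau>. 0 \<le> s \<Longrightarrow> s < \<delta> \<Longrightarrow> \<tau> \<in> space M \<Longrightarrow> g s \<tau> = gd \<tau> * s"
    and chi_lam_defined: "chi_defined M K gd lam" and chi_nu_defined: "chi_defined M K gd nu"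
    and chi_lam: "chi M K gd lam = 0" and chi_nu: "chi M K gd nu > 0"
begin

abbreviation P where "P \<equiv> lborel \<Otimes>\<^sub>M M"

interpretation pair_sigma_finite lborel M
proof -
  interpret finite_measure M by (rule finM)
  show "pair_sigma_finite lborel M" by unfold_locales
qed

lemma space_P: "space P = UNIV \<times> space M"
  by (simp add: space_pair_measure)

lemma kernel_integrable: "\<tau> \<in> space M \<Longrightarrow> integrable lborel (\<lambda>s. K s \<tau>)"
  using K_pos[of \<tau>] not_integrable_integral_eq by force

lemma kernel_mass_integrable: "integrable M (\<lambda>\<tau>. \<integral>s. K s \<tau> \<partial>lborel)"
  using integrable_snd[of "\<lambda>s \<tau>. K s \<tau>"] K_int by simp

lemma kernel_shift_measurable: "(\<lambda>(s, \<tau>). K (s + a) \<tau>) \<in> borel_measurable P"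
proof -
  have "(\<lambda>x. (fst x + a, snd x)) \<in> measurable P P" by measurable
  from measurable_compose[OF this K_meas] show ?thesis by (simp add: split_beta')
qed

lemma kernel_shift_integrable: "integrable P (\<lambda>(s, \<tau>). K (s + a) \<tau>)"
proof -
  interpret swap: pair_sigma_finite M lborel
  proof -
    interpret finite_measure M by (rule finM)
    show "pair_sigma_finite M lborel" by unfold_locales
  qed
  have "integrable (M \<Otimes>\<^sub>M lborel) (\<lambda>(\<tau>, s). K (s + a) \<tau>)"
  proof (rule swap.Fubini_integrable)
    show "(\<lambda>(\<tau>, s). K (s + a) \<tau>) \<in> borel_measurable (M \<Otimes>\<^sub>M lborel)"
      using measurable_pair_swap[OF kernel_shift_measurable[of a]] by (simp add: split_beta')
    show "integrable M (\<lambda>\<tau>. \<integral>s. norm ((\<lambda>(\<tau>, s). K (s + a) \<tau>) (\<tau>, s)) \<partial>lborel)"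
      using kernel_mass_integrable
    proof (rule Bochner_Integration.integrable_cong[THEN iffD1, rotated -1])
      fix \<tau> assume "\<tau> \<in> space M"
      then show "(\<integral>s. K s \<tau> \<partial>lborel) = (\<integral>s. norm ((\<lambda>(\<tau>, s). K (s + a) \<tau>) (\<tau>, s)) \<partial>lborel)"
        using K_nonneg integral_lborel_translate[of "\<lambda>s. K s \<tau>" a] by simp
    qed simp
    show "AE \<tau> in M. integrable lborel (\<lambda>s. (\<lambda>(\<tau>, s). K (s + a) \<tau>) (\<tau>, s))"
      by (auto intro!: AE_I2 integrable_lborel_translate kernel_integrable)
  qed
  then show ?thesis
    using integrable_product_swap_iff[of "\<lambda>(s, \<tau>). K (s + a) \<tau>"] by (simp add: split_beta')
qed

lemma kernel_g_measurable:
  assumes "\<psi> \<in> borel_measurable borel" and "\<And>s. \<psi> s \<ge> 0"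
  shows "(\<lambda>(s, \<tau>). g (\<psi> s) \<tau>) \<in> borel_measurable P"
proof -
  have "(\<lambda>(s, \<tau>). (\<psi> s, \<tau>)) \<in> measurable P (borel \<Otimes>\<^sub>M M)"
    using assms(1) by (auto intro!: measurable_Pair simp: split_beta')
  from measurable_compose[OF this g_meas] show ?thesis
    using assms(2) by (simp add: split_beta' max_absorb1)
qed

lemma kernel_g_integrable:
  assumes "\<psi> \<in> borel_measurable borel" and "\<And>s. \<psi> s \<ge> 0"
  shows "integrable P (\<lambda>(s, \<tau>). K (s + a) \<tau> * g (\<psi> s) \<tau>)"
proof (rule Bochner_Integration.integrable_bound)
  show "integrable P (\<lambda>x. B * (\<lambda>(s, \<tau>). K (s + a) \<tau>) x)"
    using kernel_shift_integrable by auto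
  show "(\<lambda>(s, \<tau>). K (s + a) \<tau> * g (\<psi> s) \<tau>) \<in> borel_measurable P"
    using borel_measurable_times[OF kernel_shift_measurable kernel_g_measurable[OF assms]]
    by (simp add: split_beta')
  have "\<bar>K (s + a) \<tau> * g (\<psi> s) \<tau>\<bar> \<le> B * K (s + a) \<tau>" if "\<tau> \<in> space M" for s \<tau>
  proof -
    have "g (\<psi> s) \<tau> * K (s + a) \<tau> \<le> B * K (s + a) \<tau>"
      using g_bdd[OF assms(2) that] K_nonneg[OF that] by (rule mult_right_mono)
    then show ?thesis
      using K_nonneg[OF that] g_nonneg[OF assms(2) that] by (simp add: abs_mult mult.commute)
  qed
  then show "AE x in P. norm ((\<lambda>(s, \<tau>). K (s + a) \<tau> * g (\<psi> s) \<tau>) x)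
      \<le> norm (B * (\<lambda>(s, \<tau>). K (s + a) \<tau>) x)"
    using K_nonneg B_nonneg by (auto intro!: AE_I2 simp: space_P)
qed

lemma Aop_integrand_integrable:
  assumes "continuous_on UNIV \<phi>" and "\<And>s. \<phi> s \<ge> 0"
  shows "integrable P (\<lambda>(s, \<tau>). K s \<tau> * g (\<phi> (t - s)) \<tau>)"
  using kernel_g_integrable[OF continuous_reflect_measurable[OF assms(1)] assms(2), of 0] by simp

lemma Aop_eq_pair_integral:
  assumes "continuous_on UNIV \<phi>" and "\<And>s. \<phi> s \<ge> 0"
  shows "Aop M K g \<phi> t = (\<integral>x. (\<lambda>(s, \<tau>). K s \<tau> * g (\<phi> (t - s)) \<tau>) x \<partial>P)"
  using integral_snd[of "\<lambda>s \<tau>. K s \<tau> * g (\<phi> (t - s)) \<tau>"] Aop_integrand_integrable[OF assms]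
  by (simp add: Aop_def)

lemma chi_eq_pair_integral:
  assumes "chi_defined M K gd z"
  shows "(\<integral>x. (\<lambda>(s, \<tau>). K s \<tau> * gd \<tau> * exp (- s * z)) x \<partial>P) = 1 - chi M K gd z"
  using integral_snd[of "\<lambda>s \<tau>. K s \<tau> * gd \<tau> * exp (- s * z)"] assms
  unfolding chi_def chi_defined_def by simp

lemma Aop_tendsto:
  assumes h: "\<And>k. continuous_on UNIV (h k)" "\<And>k s. h k s \<ge> 0"
    and \<phi>: "continuous_on UNIV \<phi>" "\<And>s. \<phi> s \<ge> 0"
    and lim: "\<And>s. (\<lambda>k. h k (t k - s)) \<longlonglongrightarrow> \<phi> (l - s)"
  shows "(\<lambda>k. Aop M K g (h k) (t k)) \<longlonglongrightarrow> Aop M K g \<phi> l"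
proof -
  have "(\<lambda>k. \<integral>x. (\<lambda>(s, \<tau>). K s \<tau> * g (h k (t k - s)) \<tau>) x \<partial>P)
        \<longlonglongrightarrow> (\<integral>x. (\<lambda>(s, \<tau>). K s \<tau> * g (\<phi> (l - s)) \<tau>) x \<partial>P)"
  proof (rule integral_dominated_convergence[where w="\<lambda>x. B * (\<lambda>(s, \<tau>). K s \<tau>) x"])
    show "integrable P (\<lambda>x. B * (\<lambda>(s, \<tau>). K s \<tau>) x)" using K_int by auto
    show "(\<lambda>(s, \<tau>). K s \<tau> * g (h k (t k - s)) \<tau>) \<in> borel_measurable P" for k
      using Aop_integrand_integrable[OF h] by simp
    show "(\<lambda>(s, \<tau>). K s \<tau> * g (\<phi> (l - s)) \<tau>) \<in> borel_measurable P"
      using Aop_integrand_integrable[OF \<phi>] by simp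
    have "(\<lambda>k. g (h k (t k - s)) \<tau>) \<longlonglongrightarrow> g (\<phi> (l - s)) \<tau>" if "\<tau> \<in> space M" for s \<tau>
      using h(2) \<phi>(2) by (intro continuous_on_tendsto_compose[OF g_cont[OF that] lim]) auto
    then show "AE x in P. (\<lambda>k. (\<lambda>(s, \<tau>). K s \<tau> * g (h k (t k - s)) \<tau>) x)
        \<longlonglongrightarrow> (\<lambda>(s, \<tau>). K s \<tau> * g (\<phi> (l - s)) \<tau>) x"
      by (auto intro!: AE_I2 tendsto_mult_left simp: space_P)
    have "\<bar>K s \<tau> * g (h k (t k - s)) \<tau>\<bar> \<le> B * K s \<tau>" if "\<tau> \<in> space M" for k s \<tau>
    proof -
      have "g (h k (t k - s)) \<tau> * K s \<tau> \<le> B * K s \<tau>"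
        using g_bdd[OF h(2) that] K_nonneg[OF that] by (rule mult_right_mono)
      then show ?thesis
        using K_nonneg[OF that] g_nonneg[OF h(2) that] by (simp add: abs_mult mult.commute)
    qed
    then show "AE x in P. norm ((\<lambda>(s, \<tau>). K s \<tau> * g (h k (t k - s)) \<tau>) x)
        \<le> B * (\<lambda>(s, \<tau>). K s \<tau>) x" for k
      by (auto intro!: AE_I2 simp: space_P)
  qed
  then show ?thesis
    using Aop_eq_pair_integral[OF h(1,2)] Aop_eq_pair_integral[OF \<phi>] by simp
qed

lemma Aop_continuous:
  assumes "continuous_on UNIV \<phi>" and "\<And>s. \<phi> s \<ge> 0"
  shows "continuous_on UNIV (Aop M K g \<phi>)"
proof -
  have "isCont (Aop M K g \<phi>) t0" for t0
  proof (rule continuous_at_sequentiallyI)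
    fix u assume "u \<longlonglongrightarrow> t0"
    then show "(\<lambda>n. Aop M K g \<phi> (u n)) \<longlonglongrightarrow> Aop M K g \<phi> t0"
      using assms by (intro Aop_tendsto continuous_on_tendsto_compose[OF assms(1)] tendsto_intros) auto
  qed
  then show ?thesis by (simp add: continuous_at_imp_continuous_on)
qed

lemma Kset_continuous: "\<phi> \<in> Kset \<delta> lam eps nu \<Longrightarrow> continuous_on UNIV \<phi>"
  by (simp add: Kset_iff)

lemma Aop_le_phi_plus:
  assumes \<phi>: "\<phi> \<in> Kset \<delta> lam eps nu"
  shows "Aop M K g \<phi> t \<le> phi_plus \<delta> lam t"
proof -
  let ?L = "\<lambda>(s, \<tau>). K s \<tau> * gd \<tau> * exp (- s * lam)"
  have "Aop M K g \<phi> t \<le> (\<integral>x. \<delta> * exp (lam * t) * ?L x \<partial>P)"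
    unfolding Aop_eq_pair_integral[OF Kset_continuous[OF \<phi>] Kset_nonneg[OF \<phi>]]
  proof (rule integral_mono)
    show "integrable P (\<lambda>(s, \<tau>). K s \<tau> * g (\<phi> (t - s)) \<tau>)"
      using Aop_integrand_integrable[OF Kset_continuous[OF \<phi>] Kset_nonneg[OF \<phi>]] .
    show "integrable P (\<lambda>x. \<delta> * exp (lam * t) * ?L x)"
      using chi_lam_defined by (simp add: chi_defined_def)
    fix x :: "real \<times> 'b" assume "x \<in> space P"
    then obtain s \<tau> where x: "x = (s, \<tau>)" and \<tau>: "\<tau> \<in> space M" by (auto simp: space_P)
    have "g (\<phi> (t - s)) \<tau> \<le> gd \<tau> * \<phi> (t - s)"
      using g_sub[OF Kset_nonneg[OF \<phi>] \<tau>] .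
    also have "\<dots> \<le> gd \<tau> * (\<delta> * exp (lam * (t - s)))"
      using \<phi> gd_pos[OF \<tau>] by (intro mult_left_mono) (auto simp: Kset_iff phi_plus_def)
    also have "\<dots> = \<delta> * exp (lam * t) * (gd \<tau> * exp (- s * lam))"
      by (simp add: exp_add[symmetric] algebra_simps)
    finally have "K s \<tau> * g (\<phi> (t - s)) \<tau> \<le> K s \<tau> * (\<delta> * exp (lam * t) * (gd \<tau> * exp (- s * lam)))"
      by (rule mult_left_mono[OF _ K_nonneg[OF \<tau>]])
    then show "(\<lambda>(s, \<tau>). K s \<tau> * g (\<phi> (t - s)) \<tau>) x \<le> \<delta> * exp (lam * t) * ?L x"
      unfolding x by (simp add: algebra_simps)
  qed
  also have "\<dots> = \<delta> * exp (lam * t)"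
    using chi_eq_pair_integral[OF chi_lam_defined] chi_lam by simp
  finally show ?thesis by (simp add: phi_plus_def)
qed

lemma gd_mult_exp_diff_le_g:
  assumes \<phi>: "\<phi> \<in> Kset \<delta> lam eps nu" and \<tau>: "\<tau> \<in> space M"
  shows "gd \<tau> * (\<delta> * exp (lam * u) - \<delta> * exp (nu * u)) \<le> g (\<phi> u) \<tau>"
proof (cases "u < 0")
  case True
  have "\<phi> u \<le> \<delta> * exp (lam * u)" using \<phi> by (simp add: Kset_iff phi_plus_def)
  also have "\<dots> < \<delta>" using True lam_pos delta_pos by (simp add: mult_pos_neg)
  finally have "g (\<phi> u) \<tau> = gd \<tau> * \<phi> u" using g_lin[OF Kset_nonneg[OF \<phi>] _ \<tau>] by simp
  moreover have "\<delta> * exp (lam * u) - \<delta> * exp (nu * u) \<le> \<phi> u"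
  proof -
    have "exp (nu * u) = exp (lam * u) * exp (eps * u)"
      by (simp add: nu_eq exp_add[symmetric] algebra_simps)
    moreover have "phi_minus \<delta> lam eps u \<le> \<phi> u" using \<phi> by (simp add: Kset_iff)
    ultimately show ?thesis using True by (simp add: phi_minus_def algebra_simps)
  qed
  ultimately show ?thesis using gd_pos[OF \<tau>] by (simp add: mult_left_mono)
next
  case False
  have "exp (lam * u) \<le> exp (nu * u)" using False nu_eq eps_pos by (simp add: mult_right_mono)
  then have "gd \<tau> * (\<delta> * exp (lam * u) - \<delta> * exp (nu * u)) \<le> 0"
    using gd_pos[OF \<tau>] delta_pos by (simp add: mult_nonneg_nonpos)
  also have "0 \<le> g (\<phi> u) \<tau>" using g_nonneg[OF Kset_nonneg[OF \<phi>] \<tau>] .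
  finally show ?thesis .
qed

lemma phi_minus_le_Aop:
  assumes \<phi>: "\<phi> \<in> Kset \<delta> lam eps nu"
  shows "phi_minus \<delta> lam eps t \<le> Aop M K g \<phi> t"
proof (cases "t \<le> 0")
  case False
  have "0 \<le> Aop M K g \<phi> t"
    unfolding Aop_eq_pair_integral[OF Kset_continuous[OF \<phi>] Kset_nonneg[OF \<phi>]]
    by (rule integral_nonneg_AE, rule AE_I2)
      (auto simp: space_P intro!: mult_nonneg_nonneg K_nonneg g_nonneg Kset_nonneg[OF \<phi>])
  then show ?thesis using False by (simp add: phi_minus_def)
next
  case True
  let ?L = "\<lambda>z. \<lambda>(s, \<tau>). K s \<tau> * gd \<tau> * exp (- s * z)"
  have "(\<integral>x. \<delta> * exp (lam * t) * ?L lam x - \<delta> * exp (nu * t) * ?L nu x \<partial>P) \<le> Aop M K g \<phi> t"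
    unfolding Aop_eq_pair_integral[OF Kset_continuous[OF \<phi>] Kset_nonneg[OF \<phi>]]
  proof (rule integral_mono)
    show "integrable P (\<lambda>(s, \<tau>). K s \<tau> * g (\<phi> (t - s)) \<tau>)"
      using Aop_integrand_integrable[OF Kset_continuous[OF \<phi>] Kset_nonneg[OF \<phi>]] .
    show "integrable P (\<lambda>x. \<delta> * exp (lam * t) * ?L lam x - \<delta> * exp (nu * t) * ?L nu x)"
      using chi_lam_defined chi_nu_defined by (simp add: chi_defined_def)
    fix x :: "real \<times> 'b" assume "x \<in> space P"
    then obtain s \<tau> where x: "x = (s, \<tau>)" and \<tau>: "\<tau> \<in> space M" by (auto simp: space_P)
    define u where "u = t - s"
    have "gd \<tau> * (\<delta> * exp (lam * u) - \<delta> * exp (nu * u)) \<le> g (\<phi> u) \<tau>"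
      by (rule gd_mult_exp_diff_le_g[OF \<phi> \<tau>])
    then have "K s \<tau> * (gd \<tau> * (\<delta> * exp (lam * u) - \<delta> * exp (nu * u))) \<le> K s \<tau> * g (\<phi> u) \<tau>"
      by (rule mult_left_mono[OF _ K_nonneg[OF \<tau>]])
    moreover have "exp (lam * u) = exp (lam * t) * exp (- s * lam)"
      "exp (nu * u) = exp (nu * t) * exp (- s * nu)"
      unfolding u_def by (simp_all add: exp_add[symmetric] algebra_simps)
    ultimately show "\<delta> * exp (lam * t) * ?L lam x - \<delta> * exp (nu * t) * ?L nu x
        \<le> (\<lambda>(s, \<tau>). K s \<tau> * g (\<phi> (t - s)) \<tau>) x"
      unfolding x by (simp add: u_def algebra_simps)
  qed
  also have "(\<integral>x. \<delta> * exp (lam * t) * ?L lam x - \<delta> * exp (nu * t) * ?L nu x \<partial>P)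
      = \<delta> * exp (lam * t) - \<delta> * exp (nu * t) * (1 - chi M K gd nu)"
    using chi_lam_defined chi_nu_defined chi_eq_pair_integral[OF chi_lam_defined]
      chi_eq_pair_integral[OF chi_nu_defined] chi_lam
    by (simp add: chi_defined_def)
  finally have "\<delta> * exp (lam * t) - \<delta> * exp (nu * t) * (1 - chi M K gd nu) \<le> Aop M K g \<phi> t" .
  moreover have "\<delta> * exp (nu * t) * (1 - chi M K gd nu) \<le> \<delta> * exp (nu * t)"
    using chi_nu delta_pos by simp
  moreover have "\<delta> * exp (nu * t) = \<delta> * exp (lam * t) * exp (eps * t)"
    by (simp add: nu_eq exp_add[symmetric] algebra_simps)
  ultimately show ?thesis
    using True by (simp add: phi_minus_def algebra_simps)
qed

lemma Aop_Kset: "\<phi> \<in> Kset \<delta> lam eps nu \<Longrightarrow> Aop M K g \<phi> \<in> Kset \<delta> lam eps nu"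
  using Aop_continuous[OF Kset_continuous Kset_nonneg] Aop_le_phi_plus phi_minus_le_Aop
  by (simp add: Kset_iff)

lemma Aop_uniformly_close_on_Icc:
  assumes f: "\<And>n. f n \<in> Kset \<delta> lam eps nu" and \<phi>: "\<phi> \<in> Kset \<delta> lam eps nu"
    and lim: "(\<lambda>n. wnorm lam nu (\<lambda>t. f n t - \<phi> t)) \<longlonglongrightarrow> 0" and \<eta>: "\<eta> > 0"
  shows "\<exists>N. \<forall>n\<ge>N. \<forall>t\<in>{-T..T}. \<bar>Aop M K g (f n) t - Aop M K g \<phi> t\<bar> < \<eta>"
proof (rule uniformly_small_on_compact_if_subseq_tendsto[OF compact_Icc \<eta>])
  fix r :: "nat \<Rightarrow> nat" and t :: "nat \<Rightarrow> real" and l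
  assume r: "strict_mono r" and t: "t \<longlonglongrightarrow> l"
  have Aop_isCont: "isCont (Aop M K g \<phi>) l"
    using Aop_continuous[OF Kset_continuous[OF \<phi>] Kset_nonneg[OF \<phi>]]
    by (simp add: continuous_on_eq_continuous_at)
  have "(\<lambda>k. f (r k) (t k - s)) \<longlonglongrightarrow> \<phi> (l - s)" for s
  proof (rule tendsto_of_wnorm_tendsto[where f="\<lambda>k. f (r k)" and x="\<lambda>k. t k - s" and \<phi>=\<phi>])
    show "weighted_bounded (\<lambda>x. f (r k) x - \<phi> x)" for k
      using f \<phi> by (intro weighted_bounded_diff Kset_weighted_bounded)
    show "(\<lambda>k. wnorm lam nu (\<lambda>x. f (r k) x - \<phi> x)) \<longlonglongrightarrow> 0"
      using LIMSEQ_subseq_LIMSEQ[OF lim r] by (simp add: comp_def)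
    show "isCont \<phi> (l - s)"
      using Kset_continuous[OF \<phi>] by (simp add: continuous_on_eq_continuous_at)
    show "(\<lambda>k. t k - s) \<longlonglongrightarrow> l - s"
      using t by (intro tendsto_intros)
  qed
  then have "(\<lambda>k. Aop M K g (f (r k)) (t k)) \<longlonglongrightarrow> Aop M K g \<phi> l"
    using f \<phi> by (intro Aop_tendsto Kset_continuous Kset_nonneg)
  moreover have "(\<lambda>k. Aop M K g \<phi> (t k)) \<longlonglongrightarrow> Aop M K g \<phi> l"
    using Aop_isCont t by (rule isCont_tendsto_compose)
  ultimately show "(\<lambda>k. Aop M K g (f (r k)) (t k) - Aop M K g \<phi> (t k)) \<longlonglongrightarrow> 0"
    using tendsto_diff by force
qed

lemma Aop_wnorm_continuous:
  assumes f: "\<And>n. f n \<in> Kset \<delta> lam eps nu" and \<phi>: "\<phi> \<in> Kset \<delta> lam eps nu"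
    and lim: "(\<lambda>n. wnorm lam nu (\<lambda>t. f n t - \<phi> t)) \<longlonglongrightarrow> 0"
  shows "(\<lambda>n. wnorm lam nu (\<lambda>t. Aop M K g (f n) t - Aop M K g \<phi> t)) \<longlonglongrightarrow> 0"
proof (rule LIMSEQ_I)
  fix e :: real assume e: "e > 0"
  from Kset_wnorm_diff_le_if_close[OF half_gt_zero[OF e]]
  obtain T \<eta> where \<eta>: "\<eta> > 0" and close: "\<forall>\<phi>\<in>Kset \<delta> lam eps nu. \<forall>\<psi>\<in>Kset \<delta> lam eps nu.
      (\<forall>t. \<bar>t\<bar> \<le> T \<longrightarrow> \<bar>\<phi> t - \<psi> t\<bar> \<le> \<eta>) \<longrightarrow> wnorm lam nu (\<lambda>t. \<phi> t - \<psi> t) \<le> e / 2"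
    by (elim exE conjE) (rule that)
  from Aop_uniformly_close_on_Icc[where f=f and T=T, OF f \<phi> lim \<eta>]
  obtain N where N: "\<forall>n\<ge>N. \<forall>t\<in>{-T..T}. \<bar>Aop M K g (f n) t - Aop M K g \<phi> t\<bar> < \<eta>"
    ..
  have "\<bar>wnorm lam nu (\<lambda>t. Aop M K g (f n) t - Aop M K g \<phi> t)\<bar> < e" if n: "n \<ge> N" for n
  proof -
    have "wnorm lam nu (\<lambda>t. Aop M K g (f n) t - Aop M K g \<phi> t) \<le> e / 2"
    proof (rule close[rule_format, OF Aop_Kset[OF f] Aop_Kset[OF \<phi>]])
      show "\<bar>Aop M K g (f n) t - Aop M K g \<phi> t\<bar> \<le> \<eta>" if "\<bar>t\<bar> \<le> T" for t
      proof -
        have "t \<in> {-T..T}" using that by (simp add: abs_le_iff)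
        then show ?thesis using N n by (auto intro: less_imp_le)
      qed
    qed
    moreover have "wnorm lam nu (\<lambda>t. Aop M K g (f n) t - Aop M K g \<phi> t) \<ge> 0"
      using f \<phi> by (intro wnorm_nonneg weighted_bounded_diff Kset_weighted_bounded Aop_Kset)
    ultimately show ?thesis using e by simp
  qed
  then show "\<exists>N. \<forall>n\<ge>N. norm (wnorm lam nu (\<lambda>t. Aop M K g (f n) t - Aop M K g \<phi> t) - 0) < e"
    by auto
qed

definition kernel_shift_modulus :: "real \<Rightarrow> real" where
  "kernel_shift_modulus a = (\<integral>x. (\<lambda>(s, \<tau>). \<bar>K (s + a) \<tau> - K s \<tau>\<bar>) x \<partial>P)"

lemma kernel_shift_diff_integrable: "integrable P (\<lambda>(s, \<tau>). \<bar>K (s + a) \<tau> - K s \<tau>\<bar>)"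
  using Bochner_Integration.integrable_diff[OF kernel_shift_integrable[of a] K_int]
  by (simp add: split_beta')

lemma kernel_shift_modulus_tendsto_zero: "(kernel_shift_modulus \<longlongrightarrow> 0) (at 0)"
proof (subst tendsto_at_iff_sequentially, intro allI impI)
  fix X :: "nat \<Rightarrow> real" assume X0: "\<forall>i. X i \<in> UNIV - {0}" and X: "X \<longlonglongrightarrow> 0"
  have XF: "filterlim X (at 0) sequentially"
    using X0 X by (intro filterlim_atI) auto
  have "(\<lambda>n. \<integral>\<tau>. (\<integral>s. \<bar>K (s + X n) \<tau> - K s \<tau>\<bar> \<partial>lborel) \<partial>M) \<longlonglongrightarrow> (\<integral>\<tau>. 0 \<partial>M)"
  proof (rule integral_dominated_convergence[where w="\<lambda>\<tau>. 2 * (\<integral>s. K s \<tau> \<partial>lborel)"])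
    show "(\<lambda>\<tau>. \<integral>s. \<bar>K (s + X n) \<tau> - K s \<tau>\<bar> \<partial>lborel) \<in> borel_measurable M" for n
      using integrable_snd[of "\<lambda>s \<tau>. \<bar>K (s + X n) \<tau> - K s \<tau>\<bar>"] kernel_shift_diff_integrable[of "X n"]
      by auto
    show "integrable M (\<lambda>\<tau>. 2 * (\<integral>s. K s \<tau> \<partial>lborel))" using kernel_mass_integrable by auto
    have "(\<lambda>n. \<integral>s. \<bar>K (s + X n) \<tau> - K s \<tau>\<bar> \<partial>lborel) \<longlonglongrightarrow> 0" if "\<tau> \<in> space M" for \<tau>
      using filterlim_compose[OF integrable_imp_L1_translation_continuous[OF kernel_integrable[OF that],
          unfolded L1_translation_continuous_def] XF] by simp
    then show "AE \<tau> in M. (\<lambda>n. \<integral>s. \<bar>K (s + X n) \<tau> - K s \<tau>\<bar> \<partial>lborel) \<longlonglongrightarrow> 0"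
      by (auto intro: AE_I2)
    have "(\<integral>s. \<bar>K (s + X n) \<tau> - K s \<tau>\<bar> \<partial>lborel) \<le> 2 * (\<integral>s. K s \<tau> \<partial>lborel)"
      if \<tau>: "\<tau> \<in> space M" for n \<tau>
      using integral_abs_translate_diff_le[OF kernel_integrable[OF \<tau>] integrable_zero, of "X n"]
        K_nonneg[OF \<tau>] by simp
    then show "AE \<tau> in M. norm (\<integral>s. \<bar>K (s + X n) \<tau> - K s \<tau>\<bar> \<partial>lborel) \<le> 2 * (\<integral>s. K s \<tau> \<partial>lborel)" for n
      by (auto intro!: AE_I2)
  qed simp
  moreover have "kernel_shift_modulus a = (\<integral>\<tau>. (\<integral>s. \<bar>K (s + a) \<tau> - K s \<tau>\<bar> \<partial>lborel) \<partial>M)" for a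
    unfolding kernel_shift_modulus_def
    using integral_snd[of "\<lambda>s \<tau>. \<bar>K (s + a) \<tau> - K s \<tau>\<bar>"] kernel_shift_diff_integrable[of a] by simp
  ultimately show "(kernel_shift_modulus \<circ> X) \<longlonglongrightarrow> 0" by (simp add: comp_def)
qed

lemma Aop_shift_bound:
  assumes \<phi>: "\<phi> \<in> Kset \<delta> lam eps nu"
  shows "\<bar>Aop M K g \<phi> t - Aop M K g \<phi> t'\<bar> \<le> B * kernel_shift_modulus (t - t')"
proof -
  define a where "a = t - t'"
  have m: "(\<lambda>s. \<phi> (t' - s)) \<in> borel_measurable borel"
    using Kset_continuous[OF \<phi>] by (rule continuous_reflect_measurable)
  let ?Ha = "\<lambda>(s, \<tau>). K (s + a) \<tau> * g (\<phi> (t' - s)) \<tau>"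
  let ?H0 = "\<lambda>(s, \<tau>). K s \<tau> * g (\<phi> (t' - s)) \<tau>"
  have int_a: "integrable P ?Ha" and int_0: "integrable P ?H0"
    using kernel_g_integrable[OF m Kset_nonneg[OF \<phi>], of a]
      kernel_g_integrable[OF m Kset_nonneg[OF \<phi>], of 0] by simp_all
  have "Aop M K g \<phi> t = (\<integral>\<tau>. (\<integral>s. K (s + a) \<tau> * g (\<phi> (t' - s)) \<tau> \<partial>lborel) \<partial>M)"
    unfolding Aop_def a_def
    using integral_lborel_translate[of "\<lambda>s. K s _ * g (\<phi> (t - s)) _" "t - t'"]
    by (simp add: algebra_simps)
  also have "\<dots> = (\<integral>x. ?Ha x \<partial>P)"
    using integral_snd[of "\<lambda>s \<tau>. K (s + a) \<tau> * g (\<phi> (t' - s)) \<tau>"] int_a by simp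
  finally have "\<bar>Aop M K g \<phi> t - Aop M K g \<phi> t'\<bar> = \<bar>(\<integral>x. ?Ha x \<partial>P) - (\<integral>x. ?H0 x \<partial>P)\<bar>"
    using Aop_eq_pair_integral[OF Kset_continuous[OF \<phi>] Kset_nonneg[OF \<phi>], of t'] by simp
  also have "\<dots> = \<bar>\<integral>x. ?Ha x - ?H0 x \<partial>P\<bar>"
    using Bochner_Integration.integral_diff[OF int_a int_0] by simp
  also have "\<dots> \<le> (\<integral>x. \<bar>?Ha x - ?H0 x\<bar> \<partial>P)" by (rule integral_abs_bound)
  also have "\<dots> \<le> (\<integral>x. B * (\<lambda>(s, \<tau>). \<bar>K (s + a) \<tau> - K s \<tau>\<bar>) x \<partial>P)"
  proof (rule integral_mono)
    show "integrable P (\<lambda>x. \<bar>?Ha x - ?H0 x\<bar>)"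
      by (rule integrable_abs[OF Bochner_Integration.integrable_diff[OF int_a int_0]])
    show "integrable P (\<lambda>x. B * (\<lambda>(s, \<tau>). \<bar>K (s + a) \<tau> - K s \<tau>\<bar>) x)"
      using kernel_shift_diff_integrable by auto
    fix x :: "real \<times> 'b" assume "x \<in> space P"
    then obtain s \<tau> where x: "x = (s, \<tau>)" and \<tau>: "\<tau> \<in> space M" by (auto simp: space_P)
    have "\<bar>?Ha x - ?H0 x\<bar> = \<bar>K (s + a) \<tau> - K s \<tau>\<bar> * g (\<phi> (t' - s)) \<tau>"
      using g_nonneg[OF Kset_nonneg[OF \<phi>] \<tau>] by (simp add: x left_diff_distrib[symmetric] abs_mult)
    also have "\<dots> \<le> \<bar>K (s + a) \<tau> - K s \<tau>\<bar> * B"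
      using g_bdd[OF Kset_nonneg[OF \<phi>] \<tau>] by (rule mult_left_mono) simp
    finally show "\<bar>?Ha x - ?H0 x\<bar> \<le> B * (\<lambda>(s, \<tau>). \<bar>K (s + a) \<tau> - K s \<tau>\<bar>) x"
      by (simp add: x mult.commute)
  qed
  also have "\<dots> = B * kernel_shift_modulus (t - t')"
    by (simp add: kernel_shift_modulus_def a_def)
  finally show ?thesis .
qed

lemma Aop_equicontinuous:
  assumes e: "e > 0"
  shows "\<exists>d>0. \<forall>\<phi>\<in>Kset \<delta> lam eps nu. \<forall>t t'. \<bar>t - t'\<bar> < d \<longrightarrow> \<bar>Aop M K g \<phi> t - Aop M K g \<phi> t'\<bar> < e"
proof -
  have "e / (B + 1) > 0" using e B_nonneg by simp
  from tendstoD[OF kernel_shift_modulus_tendsto_zero this]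
  obtain d where d: "d > 0"
    and small: "\<forall>a. a \<noteq> 0 \<and> \<bar>a\<bar> < d \<longrightarrow> \<bar>kernel_shift_modulus a\<bar> < e / (B + 1)"
    unfolding eventually_at by (auto simp: dist_real_def)
  have "B * kernel_shift_modulus a < e" if "\<bar>a\<bar> < d" for a
  proof -
    have "kernel_shift_modulus a < e / (B + 1)"
      using small that e B_nonneg by (cases "a = 0") (auto simp: kernel_shift_modulus_def abs_less_iff)
    then have "B * kernel_shift_modulus a \<le> B * (e / (B + 1))"
      using B_nonneg by (intro mult_left_mono) auto
    also have "\<dots> < e" using B_nonneg e by (simp add: field_simps)
    finally show ?thesis .
  qed
  then show ?thesis
    using d Aop_shift_bound by (meson le_less_trans)
qed

lemma Aop_locally_uniformly_Cauchy_subseq: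
  fixes f :: "nat \<Rightarrow> real \<Rightarrow> real"
  assumes f: "\<And>n. f n \<in> Kset \<delta> lam eps nu"
  obtains k where "strict_mono k" "\<And>i. uniformly_Cauchy_on {-real i..real i} (\<lambda>n. Aop M K g (f (k n)))"
proof (rule diagonal_uniformly_Cauchy_subseq[where F="\<lambda>n. Aop M K g (f n)" and S="\<lambda>i. {-real i..real i}"])
  fix i and r :: "nat \<Rightarrow> nat"
  show "\<exists>k. strict_mono k \<and> uniformly_Cauchy_on {-real i..real i} (\<lambda>n. Aop M K g (f (r (k n))))"
  proof (rule Arzela_Ascoli_uniformly_Cauchy[where F="\<lambda>n. Aop M K g (f (r n))" and M="\<delta> * exp (lam * real i)"])
    show "norm (Aop M K g (f (r n)) x) \<le> \<delta> * exp (lam * real i)" if "x \<in> {-real i..real i}" for n x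
      using Kset_abs_le[OF Aop_Kset[OF f], of "r n" x] that lam_pos delta_pos
      by (smt (verit, best) atLeastAtMost_iff exp_le_cancel_iff mult_left_mono real_norm_def)
    show "\<exists>d>0. \<forall>n y. y \<in> {-real i..real i} \<and> norm (x - y) < d
        \<longrightarrow> norm (Aop M K g (f (r n)) x - Aop M K g (f (r n)) y) < e" if "0 < e" for x e
      using Aop_equicontinuous[OF that] f by (metis real_norm_def)
  qed (auto intro: exI)
qed (rule that)

lemma Aop_relatively_compact:
  fixes f :: "nat \<Rightarrow> real \<Rightarrow> real"
  assumes f: "\<And>n. f n \<in> Kset \<delta> lam eps nu"
  shows "\<exists>r \<psi>. strict_mono r \<and> \<psi> \<in> Xsp lam nu
              \<and> (\<lambda>n. wnorm lam nu (\<lambda>t. Aop M K g (f (r n)) t - \<psi> t)) \<longlonglongrightarrow> 0"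
proof -
  obtain k where k: "strict_mono k"
    and Cauchy: "\<And>i. uniformly_Cauchy_on {-real i..real i} (\<lambda>n. Aop M K g (f (k n)))"
    by (rule Aop_locally_uniformly_Cauchy_subseq[where f=f, OF f]) (rule that)
  have "\<exists>N. \<forall>m\<ge>N. \<forall>n\<ge>N. wnorm lam nu (\<lambda>t. Aop M K g (f (k m)) t - Aop M K g (f (k n)) t) < e"
    if e: "e > 0" for e
  proof -
    from Kset_wnorm_diff_le_if_close[OF half_gt_zero[OF e]]
    obtain T \<eta> where \<eta>: "\<eta> > 0" and close: "\<forall>\<phi>\<in>Kset \<delta> lam eps nu. \<forall>\<psi>\<in>Kset \<delta> lam eps nu.
        (\<forall>t. \<bar>t\<bar> \<le> T \<longrightarrow> \<bar>\<phi> t - \<psi> t\<bar> \<le> \<eta>) \<longrightarrow> wnorm lam nu (\<lambda>t. \<phi> t - \<psi> t) \<le> e / 2"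
      by (elim exE conjE) (rule that)
    define i where "i = nat \<lceil>T\<rceil>"
    have T_i: "T \<le> real i" by (simp add: i_def real_nat_ceiling_ge)
    from Cauchy[of i, unfolded uniformly_Cauchy_on_def, rule_format, OF \<eta>]
    obtain N where N: "\<forall>t\<in>{-real i..real i}. \<forall>m\<ge>N. \<forall>n\<ge>N.
        dist (Aop M K g (f (k m)) t) (Aop M K g (f (k n)) t) < \<eta>" ..
    have half: "wnorm lam nu (\<lambda>t. Aop M K g (f (k m)) t - Aop M K g (f (k n)) t) \<le> e / 2"
      if mn: "m \<ge> N" "n \<ge> N" for m n
    proof (rule close[rule_format, OF Aop_Kset[OF f] Aop_Kset[OF f]])
      fix t :: real assume "\<bar>t\<bar> \<le> T"
      then have "t \<in> {-real i..real i}" using T_i by (simp add: abs_le_iff)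
      from N[rule_format, OF this mn] show "\<bar>Aop M K g (f (k m)) t - Aop M K g (f (k n)) t\<bar> \<le> \<eta>"
        by (simp add: dist_real_def)
    qed
    have "wnorm lam nu (\<lambda>t. Aop M K g (f (k m)) t - Aop M K g (f (k n)) t) < e"
      if "m \<ge> N" "n \<ge> N" for m n
      using half[OF that] e by linarith
    then show ?thesis by blast
  qed
  moreover have "Aop M K g (f (k n)) \<in> Xsp lam nu" for n
    using Aop_Kset[OF f] by (simp add: Kset_def)
  ultimately obtain \<psi> where "\<psi> \<in> Xsp lam nu"
    and "(\<lambda>n. wnorm lam nu (\<lambda>t. Aop M K g (f (k n)) t - \<psi> t)) \<longlonglongrightarrow> 0"
    using Xsp_complete[of "\<lambda>n. Aop M K g (f (k n))"] by blast
  with k show ?thesis by blast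
qed

end

theorem lemma4p1:
  fixes M :: "'b measure" and K :: "real \<Rightarrow> 'b \<Rightarrow> real" and g :: "real \<Rightarrow> 'b \<Rightarrow> real"
    and gd :: "'b \<Rightarrow> real" and \<tau>0 :: 'b
    and \<zeta>2 \<delta> \<omega> lam eps nu :: real
  assumes finM: "finite_measure M"
    and K_meas: "(\<lambda>(s, \<tau>). K s \<tau>) \<in> borel_measurable (lborel \<Otimes>\<^sub>M M)"
    and K_int: "integrable (lborel \<Otimes>\<^sub>M M) (\<lambda>(s, \<tau>). K s \<tau>)"
    and K_nonneg: "\<And>s \<tau>. \<tau> \<in> space M \<Longrightarrow> K s \<tau> \<ge> 0"
    and K_pos: "\<And>\<tau>. \<tau> \<in> space M \<Longrightarrow> (\<integral>s. K s \<tau> \<partial>lborel) > 0"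
    and g_meas: "(\<lambda>(v, \<tau>). g (max v 0) \<tau>) \<in> borel_measurable (borel \<Otimes>\<^sub>M M)"
    and g_nonneg: "\<And>v \<tau>. v \<ge> 0 \<Longrightarrow> \<tau> \<in> space M \<Longrightarrow> g v \<tau> \<ge> 0"
    and g_zero: "\<And>\<tau>. \<tau> \<in> space M \<Longrightarrow> g 0 \<tau> = 0"
    and g_cont: "\<And>\<tau>. \<tau> \<in> space M \<Longrightarrow> continuous_on {0..} (\<lambda>v. g v \<tau>)"
    and g_deriv: "\<And>\<tau>. \<tau> \<in> space M \<Longrightarrow> ((\<lambda>v. g v \<tau>) has_real_derivative gd \<tau>) (at 0 within {0..})"
    and gd_pos: "\<And>\<tau>. \<tau> \<in> space M \<Longrightarrow> gd \<tau> > 0"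
    and N1_tau0: "\<tau>0 \<in> space M" "{\<tau>0} \<in> sets M" "measure M {\<tau>0} = 1"
    and N1_mono: "\<And>\<tau>. \<tau> \<in> space M \<Longrightarrow> \<tau> \<noteq> \<tau>0 \<Longrightarrow> mono_on {0..} (\<lambda>v. g v \<tau>)"
    and N1_pos: "\<And>v. v > 0 \<Longrightarrow> g v \<tau>0 > 0"
    and N2_zeta: "\<zeta>2 > 0"
    and N2_mono: "strict_mono_on {0..\<zeta>2}
        (\<lambda>v. v - (\<integral>\<tau>\<in>space M - {\<tau>0}. g v \<tau> * (\<integral>s. K s \<tau> \<partial>lborel) \<partial>M))"
    and N2_ineq: "\<zeta>2 - (\<integral>\<tau>\<in>space M - {\<tau>0}. g \<zeta>2 \<tau> * (\<integral>s. K s \<tau> \<partial>lborel) \<partial>M)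
        > (\<integral>s. K s \<tau>0 \<partial>lborel) * (SUP v\<in>{0..}. g v \<tau>0)"
    and chi0_def: "chi_defined M K gd 0"
    and chi0_neg: "chi M K gd 0 < 0"
    and g_sub: "\<And>s \<tau>. s \<ge> 0 \<Longrightarrow> \<tau> \<in> space M \<Longrightarrow> g s \<tau> \<le> gd \<tau> * s"
    and L_bdd: "\<exists>B. \<forall>v \<ge> 0. \<forall>\<tau> \<in> space M. g v \<tau> \<le> B"
    and L_pos: "\<And>s \<tau>. s > 0 \<Longrightarrow> \<tau> \<in> space M \<Longrightarrow> g s \<tau> > 0"
    and L_delta: "\<delta> > 0"
    and L_lin: "\<And>s \<tau>. 0 \<le> s \<Longrightarrow> s < \<delta> \<Longrightarrow> \<tau> \<in> space M \<Longrightarrow> g s \<tau> = gd \<tau> * s"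
    and chi_dom: "\<And>z. 0 < z \<Longrightarrow> z < \<omega> \<Longrightarrow> chi_defined M K gd z"
    and chi_sign: "\<exists>z1 z2. z1 \<in> {0<..<\<omega>} \<and> z2 \<in> {0<..<\<omega>} \<and> chi M K gd z1 < 0 \<and> chi M K gd z2 > 0"
    and lam_range: "0 < lam" "lam < \<omega>"
    and lam_zero: "chi M K gd lam = 0"
    and lam_leftmost: "\<And>z. 0 < z \<Longrightarrow> z < lam \<Longrightarrow> chi M K gd z \<noteq> 0"
    and eps_pos: "eps > 0"
    and nu_def: "nu = lam + eps"
    and nu_lt: "nu < \<omega>"
    and chi_nu: "chi M K gd nu > 0"
  shows "(\<forall>f. (\<forall>n. f n \<in> Xsp lam nu)
          \<and> (\<forall>e>0. \<exists>N. \<forall>m\<ge>N. \<forall>n\<ge>N. wnorm lam nu (\<lambda>t. f m t - f n t) < e)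
        \<longrightarrow> (\<exists>\<phi>\<in>Xsp lam nu. (\<lambda>n. wnorm lam nu (\<lambda>t. f n t - \<phi> t)) \<longlonglongrightarrow> 0))
   \<and> (Kset \<delta> lam eps nu \<subseteq> Xsp lam nu)
   \<and> (\<forall>f \<phi>. (\<forall>n. f n \<in> Kset \<delta> lam eps nu) \<and> \<phi> \<in> Xsp lam nu
        \<and> (\<lambda>n. wnorm lam nu (\<lambda>t. f n t - \<phi> t)) \<longlonglongrightarrow> 0
        \<longrightarrow> \<phi> \<in> Kset \<delta> lam eps nu)
   \<and> (\<exists>B. \<forall>\<phi>\<in>Kset \<delta> lam eps nu. wnorm lam nu \<phi> \<le> B)
   \<and> (\<forall>\<phi>\<in>Kset \<delta> lam eps nu. \<forall>\<psi>\<in>Kset \<delta> lam eps nu. \<forall>a\<in>{0..1::real}.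
        (\<lambda>t. a * \<phi> t + (1 - a) * \<psi> t) \<in> Kset \<delta> lam eps nu)
   \<and> (Aop M K g ` Kset \<delta> lam eps nu \<subseteq> Kset \<delta> lam eps nu)
   \<and> (\<forall>f \<phi>. (\<forall>n. f n \<in> Kset \<delta> lam eps nu) \<and> \<phi> \<in> Kset \<delta> lam eps nu
        \<and> (\<lambda>n. wnorm lam nu (\<lambda>t. f n t - \<phi> t)) \<longlonglongrightarrow> 0
        \<longrightarrow> (\<lambda>n. wnorm lam nu (\<lambda>t. Aop M K g (f n) t - Aop M K g \<phi> t)) \<longlonglongrightarrow> 0)
   \<and> (\<forall>f :: nat \<Rightarrow> real \<Rightarrow> real. (\<forall>n. f n \<in> Kset \<delta> lam eps nu)
        \<longrightarrow> (\<exists>r \<psi>. strict_mono r \<and> \<psi> \<in> Xsp lam nu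
              \<and> (\<lambda>n. wnorm lam nu (\<lambda>t. Aop M K g (f (r n)) t - \<psi> t)) \<longlonglongrightarrow> 0))"
proof -
  obtain B0 where B0: "\<forall>v \<ge> 0. \<forall>\<tau> \<in> space M. g v \<tau> \<le> B0" using L_bdd by blast
  have nu_pos: "0 < nu" using nu_def lam_range eps_pos by simp
  have g_bdd: "\<And>v \<tau>. 0 \<le> v \<Longrightarrow> \<tau> \<in> space M \<Longrightarrow> g v \<tau> \<le> max B0 0" using B0 by force
  have "kernel_operator M K g gd (max B0 0) \<delta> lam eps nu"
    unfolding kernel_operator_def kernel_operator_axioms_def Kset_setting_def Kset_setting_axioms_def
      exp_weighted_space_def
    using finM K_meas K_int K_nonneg K_pos g_meas g_nonneg g_cont gd_pos g_sub g_bdd L_delta L_lin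
      lam_range eps_pos nu_def nu_pos lam_zero chi_nu chi_dom[of lam] chi_dom[of nu] nu_lt
    by (intro conjI; (simp; fail)?; blast)
  then interpret kernel_operator M K g gd "max B0 0" \<delta> lam eps nu .
  show ?thesis
    apply (intro conjI)
    subgoal by (intro allI impI, elim conjE, rule Xsp_complete) auto
    subgoal by (auto simp: Kset_def)
    subgoal by (intro allI impI, elim conjE, rule Kset_closed) auto
    subgoal using Kset_wnorm_le by blast
    subgoal by (intro ballI, rule Kset_convex) auto
    subgoal using Aop_Kset by blast
    subgoal by (intro allI impI, elim conjE, rule Aop_wnorm_continuous) auto
    subgoal by (intro allI impI, rule Aop_relatively_compact) auto
    done
qed

end
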